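(* Let $n\ge2$. The assignment $\phi(r_0)=R_n$, $\phi(e_0)=E_n$, $\phi(r_i)=R_{n-i}R_{n+i}$, $\phi(e_i)=E_{n-i}E_{n+i}$ for $0<i<n$ extends to a $\mathbb{Z}[\delta^{\pm1}]$-algebra homomorphism $\phi:\mathrm{Br}(\mathrm{C}_n)\to\mathrm{SBr}(\mathrm{A}_{2n-1})$.
   Context: Let $R$ be a commutative ring with an invertible element $\delta$, and $n\ge1$. The Brauer algebra of type $\mathrm{C}_n$, $\mathrm{Br}(\mathrm{C}_n,R,\delta)$, is the unital associative $R$-algebra generated by $r_0,\dots,r_{n-1},e_0,\dots,e_{n-1}$ subject to the following relations, where for distinct $i,j\in\{0,\dots,n-1\}$ we write $i\sim j$ if $|i-j|=1$ and $i\nsim j$ otherwise: $r_i^2=1$ and $r_ie_i=e_ir_i=e_i$ for all $i$; $e_i^2=\delta^2e_i$ for $i>0$; $e_0^2=\delta e_0$; $r_ir_j=r_jr_i$, $e_ir_j=r_je_i$, $e_ie_j=e_je_i$ for $i\nsim j$; $r_ir_jr_i=r_jr_ir_j$, $r_jr_ie_j=e_ie_j$, $r_ie_jr_i=r_je_ir_j$ for $i\sim j$ with $i,j>0$; and $r_1r_0r_1r_0=r_0r_1r_0r_1$, $r_1r_0e_1=r_0e_1$, $r_1e_0r_1e_0=e_0e_1e_0$, $r_1r_0r_1e_0=e_0r_1r_0r_1$, $e_1r_0e_1=\delta e_1$, $e_1e_0e_1=\delta e_1$, $e_1r_0r_1=e_1r_0$, $e_1e_0r_1=e_1e_0$. Write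 $\mathrm{Br}(\mathrm{C}_n)=\mathrm{Br}(\mathrm{C}_n,\mathbb{Z}[\delta^{\pm1}],\delta)$. $\mathrm{Br}(\mathrm{A}_{2n-1})$ denotes the classical Brauer algebra on $2n$ strands over $\mathbb{Z}[\delta^{\pm1}]$: it is free with basis the Brauer diagrams, i.e. perfect matchings of the $4n$ dots $(j,1),(j,0)$, $1\le j\le 2n$, with multiplication by concatenation where each closed loop formed is replaced by a factor $\delta$. $R_j$ ($1\le j\le 2n-1$) is the diagram joining $(j,1)$ to $(j+1,0)$, $(j+1,1)$ to $(j,0)$ and $(k,1)$ to $(k,0)$ for $k\ne j,j+1$; $E_j$ is the diagram joining $(j,1)$ to $(j+1,1)$, $(j,0)$ to $(j+1,0)$ and $(k,1)$ to $(k,0)$ for $k\neq j,j+1$. A Brauer diagram is symmetric if it is invariant under the reflection $(j,\epsilon)\mapsto(2n+1-j,\epsilon)$. $\mathrm{SBr}(\mathrm{A}_{2n-1})$ is the $\mathbb{Z}[\delta^{\pm1}]$-span of the symmetric diagrams (a subalgebra). *)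

theory Defs
  imports Main
begin

text \<open>Dots are pairs (j, eps) with 1 <= j <= m; eps = True encodes the top row (j,1),
  eps = False the bottom row (j,0). A diagram is a fixed-point-free involution of the dots
  (a perfect matching), extended by the identity outside the dots.\<close>

type_synonym dot = "nat \<times> bool"
type_synonym diagram = "dot \<Rightarrow> dot"

definition dots :: "nat \<Rightarrow> dot set" where
  "dots m = {1..m} \<times> UNIV"

definition brauer_diagrams :: "nat \<Rightarrow> diagram set" where
  "brauer_diagrams m =
     {d. (\<forall>x\<in>dots m. d x \<in> dots m \<and> d x \<noteq> x \<and> d (d x) = x) \<and> (\<forall>x. x \<notin> dots m \<longrightarrow> d x = x)}"

text \<open>Concatenation: d1 on top, d2 below; the bottom row of d1 is identified with the top
  row of d2 (the middle row).\<close>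

datatype vtx = Top nat | Mid nat | Bot nat

fun upper_emb :: "dot \<Rightarrow> vtx" where
  "upper_emb (j, True) = Top j"
| "upper_emb (j, False) = Mid j"

fun lower_emb :: "dot \<Rightarrow> vtx" where
  "lower_emb (j, True) = Mid j"
| "lower_emb (j, False) = Bot j"

fun outer_emb :: "dot \<Rightarrow> vtx" where
  "outer_emb (j, True) = Top j"
| "outer_emb (j, False) = Bot j"

definition is_mid :: "vtx \<Rightarrow> bool" where
  "is_mid v = (\<exists>j. v = Mid j)"

definition concat_edges :: "nat \<Rightarrow> diagram \<Rightarrow> diagram \<Rightarrow> (vtx \<times> vtx) set" where
  "concat_edges m d1 d2 =
     {(upper_emb x, upper_emb (d1 x)) | x. x \<in> dots m} \<union> {(lower_emb x, lower_emb (d2 x)) | x. x \<in> dots m}"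

definition concat_conn :: "nat \<Rightarrow> diagram \<Rightarrow> diagram \<Rightarrow> (vtx \<times> vtx) set" where
  "concat_conn m d1 d2 = (concat_edges m d1 d2)\<^sup>*"

definition concat :: "nat \<Rightarrow> diagram \<Rightarrow> diagram \<Rightarrow> diagram" where
  "concat m d1 d2 = (\<lambda>x. if x \<in> dots m
       then (THE y. y \<in> dots m \<and> y \<noteq> x \<and> (outer_emb x, outer_emb y) \<in> concat_conn m d1 d2)
       else x)"

definition loops :: "nat \<Rightarrow> diagram \<Rightarrow> diagram \<Rightarrow> nat" where
  "loops m d1 d2 = card {C. \<exists>j\<in>{1..m}. C = concat_conn m d1 d2 `` {Mid j} \<and> (\<forall>v\<in>C. is_mid v)}"

text \<open>An element is its coefficient function on diagrams (only values on brauer_diagrams m matter).\<close>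

definition br_mult :: "nat \<Rightarrow> 'a::comm_ring_1 \<Rightarrow> (diagram \<Rightarrow> 'a) \<Rightarrow> (diagram \<Rightarrow> 'a) \<Rightarrow> (diagram \<Rightarrow> 'a)" where
  "br_mult m \<delta> f g = (\<lambda>D. \<Sum>D1\<in>brauer_diagrams m. \<Sum>D2\<in>brauer_diagrams m.
       if concat m D1 D2 = D then f D1 * g D2 * \<delta> ^ loops m D1 D2 else 0)"

definition br_basis :: "diagram \<Rightarrow> (diagram \<Rightarrow> 'a::comm_ring_1)" where
  "br_basis D = (\<lambda>D'. if D' = D then 1 else 0)"

definition br_smult :: "'a::comm_ring_1 \<Rightarrow> (diagram \<Rightarrow> 'a) \<Rightarrow> (diagram \<Rightarrow> 'a)" where
  "br_smult c f = (\<lambda>D. c * f D)"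

definition id_diag :: "nat \<Rightarrow> diagram" where
  "id_diag m = (\<lambda>(j, eps). if (j, eps) \<in> dots m then (j, \<not> eps) else (j, eps))"

definition br_one :: "nat \<Rightarrow> (diagram \<Rightarrow> 'a::comm_ring_1)" where
  "br_one m = br_basis (id_diag m)"

definition R_diag :: "nat \<Rightarrow> nat \<Rightarrow> diagram" where
  "R_diag m j = (\<lambda>(k, eps). if (k, eps) \<notin> dots m then (k, eps)
      else if k = j then (j + 1, \<not> eps)
      else if k = j + 1 then (j, \<not> eps)
      else (k, \<not> eps))"

definition E_diag :: "nat \<Rightarrow> nat \<Rightarrow> diagram" where
  "E_diag m j = (\<lambda>(k, eps). if (k, eps) \<notin> dots m then (k, eps)
      else if k = j then (j + 1, eps)
      else if k = j + 1 then (j, eps)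
      else (k, \<not> eps))"

definition mirror :: "nat \<Rightarrow> dot \<Rightarrow> dot" where
  "mirror m = (\<lambda>(j, eps). (m + 1 - j, eps))"

definition symmetric_diag :: "nat \<Rightarrow> diagram \<Rightarrow> bool" where
  "symmetric_diag m D = (\<forall>x\<in>dots m. D (mirror m x) = mirror m (D x))"

definition SBr :: "nat \<Rightarrow> (diagram \<Rightarrow> 'a::comm_ring_1) set" where
  "SBr m = {f. \<forall>D. f D \<noteq> 0 \<longrightarrow> D \<in> brauer_diagrams m \<and> symmetric_diag m D}"

datatype Cgen = gr nat | ge nat

definition nadj :: "nat \<Rightarrow> nat \<Rightarrow> bool" where
  "nadj i j = (i \<noteq> j \<and> i + 1 \<noteq> j \<and> j + 1 \<noteq> i)"

definition adj :: "nat \<Rightarrow> nat \<Rightarrow> bool" where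
  "adj i j = (i + 1 = j \<or> j + 1 = i)"

text \<open>A relation (l, k, r) stands for the defining relation  l = delta^k r  between words.\<close>
definition BrC_rels :: "nat \<Rightarrow> (Cgen list \<times> nat \<times> Cgen list) set" where
  "BrC_rels n =
     {([gr i, gr i], 0, []) | i. i < n}
   \<union> {([gr i, ge i], 0, [ge i]) | i. i < n}
   \<union> {([ge i, gr i], 0, [ge i]) | i. i < n}
   \<union> {([ge i, ge i], 2, [ge i]) | i. 0 < i \<and> i < n}
   \<union> {([ge 0, ge 0], 1, [ge 0])}
   \<union> {([gr i, gr j], 0, [gr j, gr i]) | i j. i < n \<and> j < n \<and> nadj i j}
   \<union> {([ge i, gr j], 0, [gr j, ge i]) | i j. i < n \<and> j < n \<and> nadj i j}
   \<union> {([ge i, ge j], 0, [ge j, ge i]) | i j. i < n \<and> j < n \<and> nadj i j}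
   \<union> {([gr i, gr j, gr i], 0, [gr j, gr i, gr j]) | i j. 0 < i \<and> 0 < j \<and> i < n \<and> j < n \<and> adj i j}
   \<union> {([gr j, gr i, ge j], 0, [ge i, ge j]) | i j. 0 < i \<and> 0 < j \<and> i < n \<and> j < n \<and> adj i j}
   \<union> {([gr i, ge j, gr i], 0, [gr j, ge i, gr j]) | i j. 0 < i \<and> 0 < j \<and> i < n \<and> j < n \<and> adj i j}
   \<union> (if 1 < n then
       {([gr 1, gr 0, gr 1, gr 0], 0, [gr 0, gr 1, gr 0, gr 1]),
        ([gr 1, gr 0, ge 1], 0, [gr 0, ge 1]),
        ([gr 1, ge 0, gr 1, ge 0], 0, [ge 0, ge 1, ge 0]),
        ([gr 1, gr 0, gr 1, ge 0], 0, [ge 0, gr 1, gr 0, gr 1]),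
        ([ge 1, gr 0, ge 1], 1, [ge 1]),
        ([ge 1, ge 0, ge 1], 1, [ge 1]),
        ([ge 1, gr 0, gr 1], 0, [ge 1, gr 0]),
        ([ge 1, ge 0, gr 1], 0, [ge 1, ge 0])}
      else {})"

definition word_eval :: "nat \<Rightarrow> 'a::comm_ring_1 \<Rightarrow> (Cgen \<Rightarrow> diagram \<Rightarrow> 'a) \<Rightarrow> Cgen list \<Rightarrow> (diagram \<Rightarrow> 'a)" where
  "word_eval m \<delta> \<phi> w = foldr (\<lambda>g acc. br_mult m \<delta> (\<phi> g) acc) w (br_one m)"

fun phiC :: "nat \<Rightarrow> 'a::comm_ring_1 \<Rightarrow> Cgen \<Rightarrow> (diagram \<Rightarrow> 'a)" where
  "phiC n \<delta> (gr i) = (if i = 0 then br_basis (R_diag (2*n) n)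
      else br_mult (2*n) \<delta> (br_basis (R_diag (2*n) (n - i))) (br_basis (R_diag (2*n) (n + i))))"
| "phiC n \<delta> (ge i) = (if i = 0 then br_basis (E_diag (2*n) n)
      else br_mult (2*n) \<delta> (br_basis (E_diag (2*n) (n - i))) (br_basis (E_diag (2*n) (n + i))))"

end

(*
  Each generator image is a single diagram (up to the unit coefficient), and multiplying a
  diagram D on the left by it is an explicit combinatorial operation: the images of r_i act by
  the involution of the strand positions that they induce on the top row of D, and the images
  of e_i cap adjacent top dots and reconnect their former partners, creating a closed loop
  exactly when those dots were already joined. Hence every word evaluates to a power of delta
  times one diagram, both computable symbolically. Each defining relation of Br(C_n) then
  becomes an identity between two such diagrams that differ from the identity only near the
  strands involved, which is checked uniformly in n on finite tables. The generator images are
  symmetric because the strand involutions commute with the reflection j -> 2n + 1 - j.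
*)
theory Submission
  imports Defs "HOL-Library.FuncSet"
begin

lemma mem_dots [simp]: "(j, e) \<in> dots m \<longleftrightarrow> 1 \<le> j \<and> j \<le> m"
  by (auto simp: dots_def)

lemma finite_dots: "finite (dots m)"
  by (simp add: dots_def)

lemma brauer_diagramsI:
  assumes "\<And>x. x \<in> dots m \<Longrightarrow> D x \<in> dots m \<and> D x \<noteq> x \<and> D (D x) = x"
    and "\<And>x. x \<notin> dots m \<Longrightarrow> D x = x"
  shows "D \<in> brauer_diagrams m"
  using assms unfolding brauer_diagrams_def by blast

lemma
  assumes "D \<in> brauer_diagrams m"
  shows brauer_diagram_in_dots: "x \<in> dots m \<Longrightarrow> D x \<in> dots m"
    and brauer_diagram_neq: "x \<in> dots m \<Longrightarrow> D x \<noteq> x"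
    and brauer_diagram_outside: "x \<notin> dots m \<Longrightarrow> D x = x"
  using assms unfolding brauer_diagrams_def by blast+

lemma brauer_diagram_invol:
  assumes "D \<in> brauer_diagrams m" shows "D (D x) = x"
proof (cases "x \<in> dots m")
  case True
  with assms show ?thesis unfolding brauer_diagrams_def by blast
qed (simp add: brauer_diagram_outside[OF assms])

lemma brauer_diagram_eq_iff: "D \<in> brauer_diagrams m \<Longrightarrow> D x = D y \<longleftrightarrow> x = y"
  by (metis brauer_diagram_invol)

lemma finite_brauer_diagrams: "finite (brauer_diagrams m)"
proof -
  have "inj_on (\<lambda>D. restrict D (dots m)) (brauer_diagrams m)"
  proof (rule inj_onI)
    fix D1 D2 assume D: "D1 \<in> brauer_diagrams m" "D2 \<in> brauer_diagrams m"
      and eq: "restrict D1 (dots m) = restrict D2 (dots m)"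
    show "D1 = D2"
    proof
      fix x show "D1 x = D2 x"
        using brauer_diagram_outside[OF D(1), of x] brauer_diagram_outside[OF D(2), of x] fun_cong[OF eq, of x]
        by (cases "x \<in> dots m") auto
    qed
  qed
  moreover have "(\<lambda>D. restrict D (dots m)) ` brauer_diagrams m \<subseteq> PiE (dots m) (\<lambda>_. dots m)"
    by (auto simp: brauer_diagram_in_dots)
  then have "finite ((\<lambda>D. restrict D (dots m)) ` brauer_diagrams m)"
    by (rule finite_subset) (simp add: finite_PiE finite_dots)
  ultimately show ?thesis
    using finite_imageD by blast
qed

lemma br_mult_smult_basis:
  assumes "D1 \<in> brauer_diagrams m" "D2 \<in> brauer_diagrams m"
  shows "br_mult m \<delta> (br_smult a (br_basis D1)) (br_smult b (br_basis D2))
       = br_smult (a * b * \<delta> ^ loops m D1 D2) (br_basis (concat m D1 D2))"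
proof
  fix D
  let ?c = "if concat m D1 D2 = D then a * b * \<delta> ^ loops m D1 D2 else 0"
  have "br_mult m \<delta> (br_smult a (br_basis D1)) (br_smult b (br_basis D2)) D =
      (\<Sum>E1\<in>brauer_diagrams m. \<Sum>E2\<in>brauer_diagrams m. if E1 = D1 then if E2 = D2 then ?c else 0 else 0)"
    unfolding br_mult_def br_smult_def br_basis_def by (intro sum.cong refl) auto
  also have "\<dots> = (\<Sum>E1\<in>brauer_diagrams m. if E1 = D1 then ?c else 0)"
    using assms finite_brauer_diagrams by (intro sum.cong refl) auto
  also have "\<dots> = ?c"
    using assms finite_brauer_diagrams by simp
  finally show "br_mult m \<delta> (br_smult a (br_basis D1)) (br_smult b (br_basis D2)) D =
      br_smult (a * b * \<delta> ^ loops m D1 D2) (br_basis (concat m D1 D2)) D"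
    by (simp add: br_smult_def br_basis_def)
qed

lemma br_smult_one [simp]: "br_smult 1 f = f"
  by (simp add: br_smult_def)

lemma br_smult_smult: "br_smult a (br_smult b f) = br_smult (a * b) f"
  by (simp add: br_smult_def fun_eq_iff mult.assoc)

section \<open>Paths in the union of two partial matchings\<close>

text \<open>A path between two vertices of degree at most one must alternate between the two partial
  matchings; recording which matching supplies the next edge turns it into a path of a
  single-valued relation, which is unique.\<close>

definition alt_step :: "('v \<times> 'v) set \<Rightarrow> ('v \<times> 'v) set \<Rightarrow> (('v \<times> bool) \<times> ('v \<times> bool)) set" where
  "alt_step U L = {((u, b), (v, \<not> b)) | u v b. (u, v) \<in> (if b then U else L)}"

lemma single_valued_alt_step:
  "single_valued U \<Longrightarrow> single_valued L \<Longrightarrow> single_valued (alt_step U L)"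
  unfolding single_valued_def alt_step_def by (auto split: if_splits)

lemma alt_step_reaches:
  assumes symm: "sym U" "sym L" and sv: "single_valued U" "single_valued L"
    and start: "\<forall>w. (x, w) \<notin> (if b0 then L else U)"
    and path: "(x, v) \<in> (U \<union> L)\<^sup>*"
  shows "\<exists>b. ((x, b0), (v, b)) \<in> (alt_step U L)\<^sup>*"
  using path
proof (induction rule: rtrancl_induct)
  case base
  show ?case by blast
next
  case (step u w)
  then obtain b where reach: "((x, b0), (u, b)) \<in> (alt_step U L)\<^sup>*" by blast
  show ?case
  proof (cases "(u, w) \<in> (if b then U else L)")
    case True
    then have "((u, b), (w, \<not> b)) \<in> alt_step U L" by (auto simp: alt_step_def)
    with reach show ?thesis by (blast intro: rtrancl_into_rtrancl)
  next
    case False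
    then have uw: "(u, w) \<in> (if \<not> b then U else L)" using step.hyps(2) by auto
    from reach show ?thesis
    proof (cases rule: rtranclE)
      case base
      with uw start show ?thesis by auto
    next
      case (step p)
      then obtain w' where p: "p = (w', \<not> b)" and "(w', u) \<in> (if \<not> b then U else L)"
        by (auto simp: alt_step_def)
      then have "(u, w') \<in> (if \<not> b then U else L)"
        using symm by (auto dest: symD split: if_splits)
      with uw sv have "w' = w" by (auto simp: single_valued_def split: if_splits)
      with step(1) p show ?thesis by blast
    qed
  qed
qed

lemma alt_step_terminal:
  assumes symm: "sym U" "sym L"
    and reach: "((x, b0), (y, b)) \<in> (alt_step U L)\<^sup>*" and "y \<noteq> x"
    and deg: "(\<forall>w. (y, w) \<notin> U) \<or> (\<forall>w. (y, w) \<notin> L)"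
  shows "((y, b), s) \<notin> alt_step U L"
  using reach
proof (cases rule: rtranclE)
  case base
  with \<open>y \<noteq> x\<close> show ?thesis by simp
next
  case (step p)
  then obtain w where "(w, y) \<in> (if \<not> b then U else L)" by (auto simp: alt_step_def)
  then have "(y, w) \<in> (if \<not> b then U else L)"
    using symm by (auto dest: symD split: if_splits)
  with deg show ?thesis by (auto simp: alt_step_def split: if_splits)
qed

lemma matching_path_end_unique:
  assumes symm: "sym U" "sym L" and sv: "single_valued U" "single_valued L"
    and deg: "\<And>v. v \<in> {x, y, z} \<Longrightarrow> (\<forall>w. (v, w) \<notin> U) \<or> (\<forall>w. (v, w) \<notin> L)"
    and y: "(x, y) \<in> (U \<union> L)\<^sup>*" "y \<noteq> x" and z: "(x, z) \<in> (U \<union> L)\<^sup>*" "z \<noteq> x"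
  shows "y = z"
proof -
  obtain b0 where start: "\<forall>w. (x, w) \<notin> (if b0 then L else U)"
    using deg[of x] by (metis insertI1)
  obtain b1 b2 where r1: "((x, b0), (y, b1)) \<in> (alt_step U L)\<^sup>*"
    and r2: "((x, b0), (z, b2)) \<in> (alt_step U L)\<^sup>*"
    using alt_step_reaches[OF symm sv start] y(1) z(1) by blast
  have t1: "\<And>s. ((y, b1), s) \<notin> alt_step U L"
    using alt_step_terminal[OF symm r1 y(2)] deg[of y] by blast
  have t2: "\<And>s. ((z, b2), s) \<notin> alt_step U L"
    using alt_step_terminal[OF symm r2 z(2)] deg[of z] by blast
  have "((y, b1), (z, b2)) \<in> (alt_step U L)\<^sup>* \<or> ((z, b2), (y, b1)) \<in> (alt_step U L)\<^sup>*"
    using single_valued_confluent[OF single_valued_alt_step[OF sv] r1 r2] .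
  with t1 t2 show ?thesis
    by (auto elim: converse_rtranclE)
qed

lemma upper_emb_eq_iff [simp]: "upper_emb x = upper_emb y \<longleftrightarrow> x = y"
  by (cases x; cases y; cases "snd x"; cases "snd y") auto

lemma lower_emb_eq_iff [simp]: "lower_emb x = lower_emb y \<longleftrightarrow> x = y"
  by (cases x; cases y; cases "snd x"; cases "snd y") auto

lemma outer_emb_eq_iff [simp]: "outer_emb x = outer_emb y \<longleftrightarrow> x = y"
  by (cases x; cases y; cases "snd x"; cases "snd y") auto

lemma upper_emb_neq_Bot [simp]: "upper_emb x \<noteq> Bot j" "Bot j \<noteq> upper_emb x"
  by (cases x; cases "snd x"; auto)+

lemma lower_emb_neq_Top [simp]: "lower_emb x \<noteq> Top j" "Top j \<noteq> lower_emb x"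
  by (cases x; cases "snd x"; auto)+

definition upper_edges :: "nat \<Rightarrow> diagram \<Rightarrow> (vtx \<times> vtx) set" where
  "upper_edges m D = {(upper_emb x, upper_emb (D x)) | x. x \<in> dots m}"

definition lower_edges :: "nat \<Rightarrow> diagram \<Rightarrow> (vtx \<times> vtx) set" where
  "lower_edges m D = {(lower_emb x, lower_emb (D x)) | x. x \<in> dots m}"

lemma concat_edges_eq: "concat_edges m D1 D2 = upper_edges m D1 \<union> lower_edges m D2"
  by (simp add: concat_edges_def upper_edges_def lower_edges_def)

lemma single_valued_upper_edges: "single_valued (upper_edges m D)"
  by (auto simp: single_valued_def upper_edges_def)

lemma single_valued_lower_edges: "single_valued (lower_edges m D)"
  by (auto simp: single_valued_def lower_edges_def)

lemma sym_upper_edges: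
  assumes "D \<in> brauer_diagrams m" shows "sym (upper_edges m D)"
proof (rule symI)
  fix u v assume "(u, v) \<in> upper_edges m D"
  then obtain x where "x \<in> dots m" "u = upper_emb x" "v = upper_emb (D x)"
    by (auto simp: upper_edges_def)
  moreover have "D x \<in> dots m" "D (D x) = x"
    using assms \<open>x \<in> dots m\<close> by (simp_all add: brauer_diagram_in_dots brauer_diagram_invol)
  ultimately show "(v, u) \<in> upper_edges m D"
    unfolding upper_edges_def by (metis (mono_tags, lifting) mem_Collect_eq)
qed

lemma sym_lower_edges:
  assumes "D \<in> brauer_diagrams m" shows "sym (lower_edges m D)"
proof (rule symI)
  fix u v assume "(u, v) \<in> lower_edges m D"
  then obtain x where "x \<in> dots m" "u = lower_emb x" "v = lower_emb (D x)"
    by (auto simp: lower_edges_def)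
  moreover have "D x \<in> dots m" "D (D x) = x"
    using assms \<open>x \<in> dots m\<close> by (simp_all add: brauer_diagram_in_dots brauer_diagram_invol)
  ultimately show "(v, u) \<in> lower_edges m D"
    unfolding lower_edges_def by (metis (mono_tags, lifting) mem_Collect_eq)
qed

lemma concat_conn_upperI:
  "x \<in> dots m \<Longrightarrow> u = upper_emb x \<Longrightarrow> v = upper_emb (D1 x) \<Longrightarrow> (u, v) \<in> concat_conn m D1 D2"
  unfolding concat_conn_def concat_edges_def by (rule r_into_rtrancl) blast

lemma concat_conn_lowerI:
  "x \<in> dots m \<Longrightarrow> u = lower_emb x \<Longrightarrow> v = lower_emb (D2 x) \<Longrightarrow> (u, v) \<in> concat_conn m D1 D2"
  unfolding concat_conn_def concat_edges_def by (rule r_into_rtrancl) blast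

lemma concat_conn_refl [simp]: "(u, u) \<in> concat_conn m D1 D2"
  by (simp add: concat_conn_def)

lemma concat_conn_trans:
  "(u, v) \<in> concat_conn m D1 D2 \<Longrightarrow> (v, w) \<in> concat_conn m D1 D2 \<Longrightarrow> (u, w) \<in> concat_conn m D1 D2"
  unfolding concat_conn_def by (rule rtrancl_trans)

lemma concat_conn_sym:
  assumes "D1 \<in> brauer_diagrams m" "D2 \<in> brauer_diagrams m" "(u, v) \<in> concat_conn m D1 D2"
  shows "(v, u) \<in> concat_conn m D1 D2"
proof -
  have "sym (concat_edges m D1 D2)"
    using assms(1,2) by (simp add: concat_edges_eq sym_Un sym_upper_edges sym_lower_edges)
  with assms(3) show ?thesis
    unfolding concat_conn_def by (auto dest: symD[OF sym_rtrancl])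
qed

lemma concat_conn_outer_unique:
  assumes D: "D1 \<in> brauer_diagrams m" "D2 \<in> brauer_diagrams m"
    and y: "(outer_emb x, outer_emb y) \<in> concat_conn m D1 D2" "y \<noteq> x"
    and z: "(outer_emb x, outer_emb z) \<in> concat_conn m D1 D2" "z \<noteq> x"
  shows "y = z"
proof -
  have outer_deg: "(\<forall>w. (outer_emb v, w) \<notin> upper_edges m D1) \<or> (\<forall>w. (outer_emb v, w) \<notin> lower_edges m D2)" for v
    by (cases v; cases "snd v") (auto simp: upper_edges_def lower_edges_def)
  have "outer_emb y = outer_emb z"
  proof (rule matching_path_end_unique[OF sym_upper_edges[OF D(1)] sym_lower_edges[OF D(2)]
        single_valued_upper_edges single_valued_lower_edges])
    show "(outer_emb x, outer_emb y) \<in> (upper_edges m D1 \<union> lower_edges m D2)\<^sup>*"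
      "(outer_emb x, outer_emb z) \<in> (upper_edges m D1 \<union> lower_edges m D2)\<^sup>*"
      using y(1) z(1) by (simp_all add: concat_conn_def concat_edges_eq)
    show "(\<forall>w. (v, w) \<notin> upper_edges m D1) \<or> (\<forall>w. (v, w) \<notin> lower_edges m D2)"
      if "v \<in> {outer_emb x, outer_emb y, outer_emb z}" for v
      using that outer_deg by blast
  qed (use y(2) z(2) in simp_all)
  then show ?thesis by simp
qed

lemma concat_eqI:
  assumes D: "D1 \<in> brauer_diagrams m" "D2 \<in> brauer_diagrams m"
    and f: "\<And>x. x \<in> dots m \<Longrightarrow> f x \<in> dots m \<and> f x \<noteq> x \<and> (outer_emb x, outer_emb (f x)) \<in> concat_conn m D1 D2"
    and f_outside: "\<And>x. x \<notin> dots m \<Longrightarrow> f x = x"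
  shows "concat m D1 D2 = f"
proof
  fix x show "concat m D1 D2 x = f x"
  proof (cases "x \<in> dots m")
    case True
    have "(THE y. y \<in> dots m \<and> y \<noteq> x \<and> (outer_emb x, outer_emb y) \<in> concat_conn m D1 D2) = f x"
      by (rule the_equality) (use f[OF True] concat_conn_outer_unique[OF D] in blast)+
    with True show ?thesis by (simp add: concat_def)
  qed (simp add: concat_def f_outside)
qed

section \<open>Counting closed loops\<close>

lemma concat_conn_eq_Image:
  assumes "D1 \<in> brauer_diagrams m" "D2 \<in> brauer_diagrams m" "(u, v) \<in> concat_conn m D1 D2"
  shows "concat_conn m D1 D2 `` {u} = concat_conn m D1 D2 `` {v}"
  using assms concat_conn_sym concat_conn_trans by blast

lemma concat_conn_Mid_closed:
  assumes closed: "\<forall>k\<in>K. upper_emb (D1 (k, False)) \<in> Mid ` K \<and> lower_emb (D2 (k, True)) \<in> Mid ` K"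
    and "j \<in> K"
  shows "concat_conn m D1 D2 `` {Mid j} \<subseteq> Mid ` K"
proof
  fix w assume "w \<in> concat_conn m D1 D2 `` {Mid j}"
  then have "(Mid j, w) \<in> (concat_edges m D1 D2)\<^sup>*" by (simp add: concat_conn_def)
  then show "w \<in> Mid ` K"
  proof (induction rule: rtrancl_induct)
    case (step v w)
    then obtain k where "k \<in> K" "v = Mid k" by blast
    moreover have "Mid k = upper_emb x \<longleftrightarrow> x = (k, False)" "Mid k = lower_emb x \<longleftrightarrow> x = (k, True)" for x
      by (cases x; cases "snd x"; auto)+
    ultimately show ?case
      using step.hyps(2) closed unfolding concat_edges_def by auto
  qed (use \<open>j \<in> K\<close> in simp)
qed

lemma loops_eq_card:
  assumes D: "D1 \<in> brauer_diagrams m" "D2 \<in> brauer_diagrams m"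
    and J: "J \<subseteq> {1..m}"
    and closed: "\<And>j. j \<in> J \<Longrightarrow> concat_conn m D1 D2 `` {Mid j} \<subseteq> range Mid"
    and distinct: "\<And>j j'. j \<in> J \<Longrightarrow> j' \<in> J \<Longrightarrow> (Mid j, Mid j') \<in> concat_conn m D1 D2 \<Longrightarrow> j = j'"
    and cover: "\<And>k. 1 \<le> k \<Longrightarrow> k \<le> m \<Longrightarrow>
       (\<exists>y\<in>dots m. (Mid k, outer_emb y) \<in> concat_conn m D1 D2) \<or> (\<exists>j\<in>J. (Mid j, Mid k) \<in> concat_conn m D1 D2)"
  shows "loops m D1 D2 = card J"
proof -
  let ?C = "\<lambda>j. concat_conn m D1 D2 `` {Mid j}"
  have outer_not_mid: "\<not> is_mid (outer_emb y)" for y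
    by (cases y; cases "snd y") (auto simp: is_mid_def)
  have "{C. \<exists>j\<in>{1..m}. C = ?C j \<and> (\<forall>v\<in>C. is_mid v)} = ?C ` J"
  proof (intro equalityI subsetI)
    fix C assume "C \<in> {C. \<exists>j\<in>{1..m}. C = ?C j \<and> (\<forall>v\<in>C. is_mid v)}"
    then obtain k where k: "1 \<le> k" "k \<le> m" "C = ?C k" "\<forall>v\<in>C. is_mid v" by auto
    with cover[OF k(1,2)] outer_not_mid obtain j where "j \<in> J" "(Mid j, Mid k) \<in> concat_conn m D1 D2"
      by blast
    with k(3) concat_conn_eq_Image[OF D] show "C \<in> ?C ` J" by auto
  next
    fix C assume "C \<in> ?C ` J"
    with J closed show "C \<in> {C. \<exists>j\<in>{1..m}. C = ?C j \<and> (\<forall>v\<in>C. is_mid v)}"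
      by (fastforce simp: is_mid_def)
  qed
  moreover have "inj_on ?C J"
  proof (rule inj_onI)
    fix j j' assume "j \<in> J" "j' \<in> J" "?C j = ?C j'"
    then show "j = j'" using distinct[of j j'] by (metis Image_singleton_iff concat_conn_refl)
  qed
  ultimately show ?thesis
    unfolding loops_def by (simp add: card_image)
qed

lemma brauer_diagram_reconnect:
  assumes D: "D \<in> brauer_diagrams m" and ab: "a \<in> dots m" "b \<in> dots m" "a \<noteq> b" "D a \<noteq> b"
  shows "D(D a := D b, D b := D a, a := b, b := a) \<in> brauer_diagrams m"
proof -
  have Da: "D a \<in> dots m" "D a \<noteq> a" "D (D a) = a" and Db: "D b \<in> dots m" "D b \<noteq> b" "D (D b) = b"
    using ab D by (simp_all add: brauer_diagram_in_dots brauer_diagram_neq brauer_diagram_invol)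
  have "D b \<noteq> a"
    using Db(3) ab(4) by metis
  then show ?thesis
    using D Da Db ab
    by (intro brauer_diagramsI) (auto simp: brauer_diagram_in_dots brauer_diagram_neq
        brauer_diagram_invol brauer_diagram_outside brauer_diagram_eq_iff)
qed

definition is_invol :: "nat \<Rightarrow> (nat \<Rightarrow> nat) \<Rightarrow> bool" where
  "is_invol m \<sigma> \<longleftrightarrow> (\<forall>k. 1 \<le> k \<and> k \<le> m \<longrightarrow> 1 \<le> \<sigma> k \<and> \<sigma> k \<le> m \<and> \<sigma> (\<sigma> k) = k)"

definition perm_diag :: "nat \<Rightarrow> (nat \<Rightarrow> nat) \<Rightarrow> diagram" where
  "perm_diag m \<sigma> = (\<lambda>x. if x \<in> dots m then (\<sigma> (fst x), \<not> snd x) else x)"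

definition top_perm :: "(nat \<Rightarrow> nat) \<Rightarrow> dot \<Rightarrow> dot" where
  "top_perm \<sigma> x = (if snd x then (\<sigma> (fst x), True) else x)"

definition permute_top :: "nat \<Rightarrow> (nat \<Rightarrow> nat) \<Rightarrow> diagram \<Rightarrow> diagram" where
  "permute_top m \<sigma> D = (\<lambda>x. if x \<in> dots m then top_perm \<sigma> (D (top_perm \<sigma> x)) else x)"

definition cap_top :: "nat \<Rightarrow> nat \<Rightarrow> diagram \<Rightarrow> diagram" where
  "cap_top m j D = (\<lambda>x. if x \<notin> dots m then x
      else if x = (j, True) then (j + 1, True)
      else if x = (j + 1, True) then (j, True)
      else if D (j, True) = (j + 1, True) then D x
      else if x = D (j, True) then D (j + 1, True)
      else if x = D (j + 1, True) then D (j, True)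
      else D x)"

lemma perm_diag_brauer:
  assumes "is_invol m \<sigma>" shows "perm_diag m \<sigma> \<in> brauer_diagrams m"
proof (rule brauer_diagramsI)
  fix x :: dot assume "x \<in> dots m"
  with assms show "perm_diag m \<sigma> x \<in> dots m \<and> perm_diag m \<sigma> x \<noteq> x \<and> perm_diag m \<sigma> (perm_diag m \<sigma> x) = x"
    by (cases x) (auto simp: perm_diag_def is_invol_def)
qed (simp add: perm_diag_def)

lemma permute_top_brauer:
  assumes D: "D \<in> brauer_diagrams m" and \<sigma>: "is_invol m \<sigma>"
  shows "permute_top m \<sigma> D \<in> brauer_diagrams m"
proof (rule brauer_diagramsI)
  have top_perm: "top_perm \<sigma> x \<in> dots m" "top_perm \<sigma> (top_perm \<sigma> x) = x" if "x \<in> dots m" for x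
    using that \<sigma> by (cases x; auto simp: top_perm_def is_invol_def)+
  fix x assume x: "x \<in> dots m"
  then have "D (top_perm \<sigma> x) \<in> dots m" "D (top_perm \<sigma> x) \<noteq> top_perm \<sigma> x"
    using D top_perm by (simp_all add: brauer_diagram_in_dots brauer_diagram_neq)
  with x show "permute_top m \<sigma> D x \<in> dots m \<and> permute_top m \<sigma> D x \<noteq> x
      \<and> permute_top m \<sigma> D (permute_top m \<sigma> D x) = x"
    using top_perm brauer_diagram_invol[OF D] by (metis permute_top_def)
qed (simp add: permute_top_def)

lemma cap_top_id:
  assumes "D \<in> brauer_diagrams m" "D (j, True) = (j + 1, True)"
  shows "cap_top m j D = D"
proof
  fix x
  have "D (j + 1, True) = (j, True)"
    using assms brauer_diagram_invol by metis
  with assms show "cap_top m j D x = D x"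
    by (auto simp: cap_top_def brauer_diagram_outside)
qed

lemma cap_top_eq_fun_upd:
  assumes D: "D \<in> brauer_diagrams m" and "1 \<le> j" "j + 1 \<le> m" "D (j, True) \<noteq> (j + 1, True)"
  shows "cap_top m j D = D(D (j, True) := D (j + 1, True), D (j + 1, True) := D (j, True),
      (j, True) := (j + 1, True), (j + 1, True) := (j, True))"
proof
  fix x
  show "cap_top m j D x = (D(D (j, True) := D (j + 1, True), D (j + 1, True) := D (j, True),
      (j, True) := (j + 1, True), (j + 1, True) := (j, True))) x"
    using assms brauer_diagram_outside[OF D, of x] brauer_diagram_in_dots[OF D]
      brauer_diagram_neq[OF D] brauer_diagram_invol[OF D]
    by (auto simp: cap_top_def brauer_diagram_eq_iff[OF D])
qed

lemma cap_top_brauer: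
  assumes D: "D \<in> brauer_diagrams m" and j: "1 \<le> j" "j + 1 \<le> m"
  shows "cap_top m j D \<in> brauer_diagrams m"
proof (cases "D (j, True) = (j + 1, True)")
  case False
  with assms show ?thesis
    by (simp add: cap_top_eq_fun_upd brauer_diagram_reconnect)
qed (simp add: cap_top_id D)

section \<open>Multiplying by a permutation diagram or by caps\<close>

lemma
  assumes D: "D \<in> brauer_diagrams m" and \<sigma>: "is_invol m \<sigma>"
  shows concat_perm_diag: "concat m (perm_diag m \<sigma>) D = permute_top m \<sigma> D"
    and loops_perm_diag: "loops m (perm_diag m \<sigma>) D = 0"
proof -
  let ?P = "perm_diag m \<sigma>"
  have mid_top: "(Mid k, Top (\<sigma> k)) \<in> concat_conn m ?P D" if "1 \<le> k" "k \<le> m" for k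
    using that by (intro concat_conn_upperI[of "(k, False)"]) (simp_all add: perm_diag_def)
  have top_mid: "(Top k, Mid (\<sigma> k)) \<in> concat_conn m ?P D" if "1 \<le> k" "k \<le> m" for k
    using that by (intro concat_conn_upperI[of "(k, True)"]) (simp_all add: perm_diag_def)
  have outer_lower: "(outer_emb x, lower_emb (top_perm \<sigma> x)) \<in> concat_conn m ?P D"
    and lower_outer: "(lower_emb x, outer_emb (top_perm \<sigma> x)) \<in> concat_conn m ?P D"
    if "x \<in> dots m" for x
    using that mid_top top_mid by (cases x; cases "snd x"; simp add: top_perm_def)+
  show "concat m ?P D = permute_top m \<sigma> D"
  proof (rule concat_eqI[OF perm_diag_brauer[OF \<sigma>] D])
    fix x assume x: "x \<in> dots m"
    have y: "top_perm \<sigma> x \<in> dots m"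
      using x \<sigma> by (cases x) (auto simp: top_perm_def is_invol_def)
    then have "(outer_emb x, outer_emb (permute_top m \<sigma> D x)) \<in> concat_conn m ?P D"
      using x concat_conn_trans[OF concat_conn_trans[OF outer_lower[OF x] concat_conn_lowerI[OF y refl refl]]
          lower_outer[OF brauer_diagram_in_dots[OF D y]]]
      by (simp add: permute_top_def)
    with x show "permute_top m \<sigma> D x \<in> dots m \<and> permute_top m \<sigma> D x \<noteq> x
        \<and> (outer_emb x, outer_emb (permute_top m \<sigma> D x)) \<in> concat_conn m ?P D"
      using permute_top_brauer[OF D \<sigma>] by (simp add: brauer_diagram_in_dots brauer_diagram_neq)
  qed (simp add: permute_top_def)
  show "loops m ?P D = 0"
  proof -
    have "loops m ?P D = card ({} :: nat set)"
    proof (rule loops_eq_card[OF perm_diag_brauer[OF \<sigma>] D])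
      fix k assume k: "1 \<le> k" "k \<le> m"
      then have "(\<sigma> k, True) \<in> dots m"
        using \<sigma> by (simp add: is_invol_def)
      with mid_top[OF k] show "(\<exists>y\<in>dots m. (Mid k, outer_emb y) \<in> concat_conn m ?P D) \<or>
          (\<exists>j\<in>{}. (Mid j, Mid k) \<in> concat_conn m ?P D)"
        by (metis outer_emb.simps(1))
    qed auto
    then show ?thesis by simp
  qed
qed

lemma concat_conn_outer_lower:
  assumes "x \<in> dots m" "snd x \<Longrightarrow> P x = (fst x, False)"
  shows "(outer_emb x, lower_emb x) \<in> concat_conn m P D"
  using assms by (cases x; cases "snd x") (auto intro: concat_conn_upperI[of x])

lemma concat_conn_lower_outer:
  assumes "P \<in> brauer_diagrams m" "D \<in> brauer_diagrams m"
    and "x \<in> dots m" "snd x \<Longrightarrow> P x = (fst x, False)"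
  shows "(lower_emb x, outer_emb x) \<in> concat_conn m P D"
  using assms concat_conn_sym concat_conn_outer_lower by blast

lemma concat_eq_by_lower_conn:
  assumes P: "P \<in> brauer_diagrams m" and D: "D \<in> brauer_diagrams m" and W: "W \<in> brauer_diagrams m"
    and caps: "\<And>x. x \<in> T \<Longrightarrow> x \<in> dots m \<and> snd x \<and> P x \<in> T \<and> W x = P x"
    and vertical: "\<And>x. x \<in> dots m \<Longrightarrow> x \<notin> T \<Longrightarrow> snd x \<Longrightarrow> P x = (fst x, False)"
    and lower: "\<And>x. x \<in> dots m \<Longrightarrow> x \<notin> T \<Longrightarrow> (lower_emb x, lower_emb (W x)) \<in> concat_conn m P D"
  shows "concat m P D = W"
proof (rule concat_eqI[OF P D])
  fix x assume x: "x \<in> dots m"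
  have "(outer_emb x, outer_emb (W x)) \<in> concat_conn m P D"
  proof (cases "x \<in> T")
    case True
    then have "snd (P x)" using caps by blast
    then show ?thesis
      using caps[OF True] by (cases x; cases "P x") (auto intro: concat_conn_upperI[of x])
  next
    case False
    have Wx: "W x \<in> dots m" "W x \<notin> T"
      using False caps brauer_diagram_invol[OF W] brauer_diagram_in_dots[OF W x] by metis+
    show ?thesis
      using concat_conn_trans[OF concat_conn_trans[OF concat_conn_outer_lower[of x m P D, OF x vertical[OF x False]]
          lower[OF x False]] concat_conn_lower_outer[of P m D "W x", OF P D Wx(1) vertical[OF Wx]]] .
  qed
  with x W show "W x \<in> dots m \<and> W x \<noteq> x \<and> (outer_emb x, outer_emb (W x)) \<in> concat_conn m P D"
    by (simp add: brauer_diagram_in_dots brauer_diagram_neq)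
qed (simp add: brauer_diagram_outside[OF W])

lemma cap_top_partners:
  assumes W: "W \<in> brauer_diagrams m" and j: "1 \<le> j" "j + 1 \<le> m" and "W (j, True) \<noteq> (j + 1, True)"
  shows "cap_top m j W (W (j, True)) = W (j + 1, True)" "cap_top m j W (W (j + 1, True)) = W (j, True)"
proof -
  have "W (j, True) \<noteq> (j, True)" "W (j + 1, True) \<noteq> (j + 1, True)"
    using j by (simp_all add: brauer_diagram_neq[OF W])
  moreover have "W (j + 1, True) \<noteq> (j, True)"
    using assms(4) brauer_diagram_invol[OF W] by metis
  ultimately
  show "cap_top m j W (W (j, True)) = W (j + 1, True)" "cap_top m j W (W (j + 1, True)) = W (j, True)"
    using assms by (simp_all add: cap_top_eq_fun_upd brauer_diagram_eq_iff[OF W])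
qed

text \<open>The bottom cap of P joining Mid j and Mid (j + 1) connects the former partners of the top
  dots j and j + 1.\<close>

lemma cap_top_lower_conn:
  assumes P: "P \<in> brauer_diagrams m" and D: "D \<in> brauer_diagrams m" and W: "W \<in> brauer_diagrams m"
    and j: "1 \<le> j" "j + 1 \<le> m"
    and mid: "(Mid j, Mid (j + 1)) \<in> concat_conn m P D"
    and lower: "\<And>x. x \<in> dots m \<Longrightarrow> x \<notin> T \<Longrightarrow> (lower_emb x, lower_emb (W x)) \<in> concat_conn m P D"
    and top: "(j, True) \<notin> T" "(j + 1, True) \<notin> T"
    and x: "x \<in> dots m" "x \<notin> T" "x \<noteq> (j, True)" "x \<noteq> (j + 1, True)"
  shows "(lower_emb x, lower_emb (cap_top m j W x)) \<in> concat_conn m P D"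
proof (cases "W (j, True) = (j + 1, True)")
  case True
  then show ?thesis using cap_top_id[OF W True] lower x by simp
next
  case False
  let ?A = "(j, True)" and ?B = "(j + 1, True)"
  have A: "(Mid j, lower_emb (W ?A)) \<in> concat_conn m P D" and B: "(Mid (j + 1), lower_emb (W ?B)) \<in> concat_conn m P D"
    using lower[of ?A] lower[of ?B] j top by simp_all
  have "x = W ?A \<or> x = W ?B \<or> x \<notin> {?A, ?B, W ?A, W ?B}"
    using x by blast
  then show ?thesis
  proof (elim disjE)
    assume "x = W ?A"
    then show ?thesis
      using concat_conn_trans[OF concat_conn_trans[OF concat_conn_sym[OF P D A] mid] B]
        cap_top_partners[OF W j False] by simp
  next
    assume "x = W ?B"
    then show ?thesis
      using concat_conn_trans[OF concat_conn_trans[OF concat_conn_sym[OF P D B] concat_conn_sym[OF P D mid]] A]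
        cap_top_partners[OF W j False] by simp
  next
    assume "x \<notin> {?A, ?B, W ?A, W ?B}"
    then show ?thesis
      using lower[OF x(1,2)] by (simp add: cap_top_def)
  qed
qed

lemma E_diag_brauer: "1 \<le> j \<Longrightarrow> j + 1 \<le> m \<Longrightarrow> E_diag m j \<in> brauer_diagrams m"
  by (intro brauer_diagramsI) (auto simp: E_diag_def split: if_splits)

context
  fixes m j :: nat and D :: diagram
  assumes D: "D \<in> brauer_diagrams m" and j: "1 \<le> j" "j + 1 \<le> m"
begin

lemma E_vertical:
  "x \<in> dots m \<Longrightarrow> x \<notin> {(j, True), (j + 1, True)} \<Longrightarrow> snd x \<Longrightarrow> E_diag m j x = (fst x, False)"
  by (cases x) (auto simp: E_diag_def)

lemma E_mid_conn:
  "(Mid j, Mid (j + 1)) \<in> concat_conn m (E_diag m j) D" "(Mid (j + 1), Mid j) \<in> concat_conn m (E_diag m j) D"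
  using j by (intro concat_conn_upperI[of "(j, False)"] concat_conn_upperI[of "(j + 1, False)"];
      simp add: E_diag_def)+

lemma concat_E_diag: "concat m (E_diag m j) D = cap_top m j D"
proof (rule concat_eq_by_lower_conn[OF E_diag_brauer[OF j] D cap_top_brauer[OF D j],
      where T = "{(j, True), (j + 1, True)}"])
  show "x \<in> dots m \<and> snd x \<and> E_diag m j x \<in> {(j, True), (j + 1, True)} \<and> cap_top m j D x = E_diag m j x"
    if "x \<in> {(j, True), (j + 1, True)}" for x
    using that j by (elim insertE emptyE) (simp_all add: E_diag_def cap_top_def)
next
  show "(lower_emb x, lower_emb (cap_top m j D x)) \<in> concat_conn m (E_diag m j) D"
    if "x \<in> dots m" "x \<notin> {(j, True), (j + 1, True)}" for x
    using that by (intro cap_top_lower_conn[OF E_diag_brauer[OF j] D D j E_mid_conn(1), where T = "{}"])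
      (auto intro: concat_conn_lowerI)
qed (rule E_vertical)

lemma loops_E_diag: "loops m (E_diag m j) D = (if D (j, True) = (j + 1, True) then 1 else 0)"
proof -
  let ?P = "E_diag m j" and ?A = "(j, True)" and ?B = "(j + 1, True)"
  have P: "?P \<in> brauer_diagrams m" using E_diag_brauer[OF j] .
  have outer: "\<exists>y\<in>dots m. (Mid k, outer_emb y) \<in> concat_conn m ?P D"
    if "1 \<le> k" "k \<le> m" "k \<noteq> j" "k \<noteq> j + 1" for k
    using that by (intro bexI[of _ "(k, True)"] concat_conn_upperI[of "(k, False)"]) (auto simp: E_diag_def)
  show ?thesis
  proof (cases "D ?A = ?B")
    case True
    have "D ?B = ?A" using True brauer_diagram_invol[OF D] by metis
    with True have "concat_conn m ?P D `` {Mid j} \<subseteq> Mid ` {j, j + 1}"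
      by (intro concat_conn_Mid_closed) (auto simp: E_diag_def)
    then have "loops m ?P D = card {j}"
    proof (intro loops_eq_card[OF P D])
      fix k assume "1 \<le> k" "k \<le> m"
      then show "(\<exists>y\<in>dots m. (Mid k, outer_emb y) \<in> concat_conn m ?P D) \<or>
          (\<exists>j'\<in>{j}. (Mid j', Mid k) \<in> concat_conn m ?P D)"
        using outer E_mid_conn by (cases "k = j \<or> k = j + 1") auto
    qed (use j in auto)
    with True show ?thesis by simp
  next
    case False
    have "D ?A \<in> dots m" "D ?A \<notin> {?A, ?B}"
      using False j brauer_diagram_in_dots[OF D] brauer_diagram_neq[OF D] by auto
    then have "\<exists>y\<in>dots m. (Mid j, outer_emb y) \<in> concat_conn m ?P D"
      using concat_conn_trans[OF concat_conn_lowerI[of ?A] concat_conn_lower_outer[OF P D _ E_vertical]] j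
      by fastforce
    then have "loops m ?P D = card ({} :: nat set)"
      using outer E_mid_conn concat_conn_trans by (intro loops_eq_card[OF P D]) blast+
    with False show ?thesis by simp
  qed
qed

end

text \<open>The diagram of E_a E_b for distant a and b.\<close>

definition E2_diag :: "nat \<Rightarrow> nat \<Rightarrow> nat \<Rightarrow> diagram" where
  "E2_diag m a b = (\<lambda>(k, e). if (k, e) \<notin> dots m then (k, e)
     else if k = a then (a + 1, e) else if k = a + 1 then (a, e)
     else if k = b then (b + 1, e) else if k = b + 1 then (b, e) else (k, \<not> e))"

lemma E2_diag_brauer: "1 \<le> a \<Longrightarrow> a + 1 < b \<Longrightarrow> b + 1 \<le> m \<Longrightarrow> E2_diag m a b \<in> brauer_diagrams m"
  by (intro brauer_diagramsI) (auto simp: E2_diag_def split: if_splits)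

context
  fixes m a b :: nat and D :: diagram
  assumes D: "D \<in> brauer_diagrams m" and ab: "1 \<le> a" "a + 1 < b" "b + 1 \<le> m"
begin

lemma E2_vertical:
  "x \<in> dots m \<Longrightarrow> x \<notin> {(a, True), (a + 1, True), (b, True), (b + 1, True)} \<Longrightarrow> snd x
   \<Longrightarrow> E2_diag m a b x = (fst x, False)"
  by (cases x) (auto simp: E2_diag_def)

lemma E2_mid_conn:
  "(Mid a, Mid (a + 1)) \<in> concat_conn m (E2_diag m a b) D" "(Mid (a + 1), Mid a) \<in> concat_conn m (E2_diag m a b) D"
  "(Mid b, Mid (b + 1)) \<in> concat_conn m (E2_diag m a b) D" "(Mid (b + 1), Mid b) \<in> concat_conn m (E2_diag m a b) D"
  using ab by (intro concat_conn_upperI[of "(a, False)"] concat_conn_upperI[of "(a + 1, False)"]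
      concat_conn_upperI[of "(b, False)"] concat_conn_upperI[of "(b + 1, False)"]; simp add: E2_diag_def)+

lemma E2_mid_outer:
  "1 \<le> k \<Longrightarrow> k \<le> m \<Longrightarrow> k \<notin> {a, a + 1, b, b + 1}
   \<Longrightarrow> \<exists>y\<in>dots m. (Mid k, outer_emb y) \<in> concat_conn m (E2_diag m a b) D"
  by (intro bexI[of _ "(k, True)"] concat_conn_upperI[of "(k, False)"]) (auto simp: E2_diag_def)

lemma E2_lower_outer:
  assumes "(u, lower_emb z) \<in> concat_conn m (E2_diag m a b) D" "z \<in> dots m"
    "z \<notin> {(a, True), (a + 1, True), (b, True), (b + 1, True)}"
  shows "\<exists>y\<in>dots m. (u, outer_emb y) \<in> concat_conn m (E2_diag m a b) D"
  using assms concat_conn_trans[OF assms(1) concat_conn_lower_outer[OF E2_diag_brauer[OF ab] D _ E2_vertical]]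
  by blast

lemma E2_lower_conn_cap_b:
  "x \<in> dots m \<Longrightarrow> x \<noteq> (b, True) \<Longrightarrow> x \<noteq> (b + 1, True)
   \<Longrightarrow> (lower_emb x, lower_emb (cap_top m b D x)) \<in> concat_conn m (E2_diag m a b) D"
  using ab E2_mid_conn(3)
  by (intro cap_top_lower_conn[OF E2_diag_brauer[OF ab] D D, where T = "{}"]) (auto intro: concat_conn_lowerI)

lemma concat_E2_diag: "concat m (E2_diag m a b) D = cap_top m a (cap_top m b D)"
proof -
  let ?Y = "cap_top m b D"
  have ja: "1 \<le> a" "a + 1 \<le> m" and jb: "1 \<le> b" "b + 1 \<le> m"
    using ab by simp_all
  have Y: "?Y \<in> brauer_diagrams m" using cap_top_brauer[OF D jb] .
  have YB: "?Y (b, True) = (b + 1, True)" "?Y (b + 1, True) = (b, True)"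
    using jb by (simp_all add: cap_top_def)
  have "(b, True) \<noteq> ?Y x" "(b + 1, True) \<noteq> ?Y x" if "x \<in> {(a, True), (a + 1, True)}" for x
    using that ab YB brauer_diagram_invol[OF Y, of x] by auto
  then have "cap_top m a ?Y (a, True) = (a + 1, True)" "cap_top m a ?Y (a + 1, True) = (a, True)"
    "cap_top m a ?Y (b, True) = (b + 1, True)" "cap_top m a ?Y (b + 1, True) = (b, True)"
    using ab YB by (simp_all add: cap_top_def[of m a])
  moreover have "E2_diag m a b (a, True) = (a + 1, True)" "E2_diag m a b (a + 1, True) = (a, True)"
    "E2_diag m a b (b, True) = (b + 1, True)" "E2_diag m a b (b + 1, True) = (b, True)"
    using ab by (simp_all add: E2_diag_def)
  ultimately have caps: "cap_top m a ?Y x = E2_diag m a b x"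
    if "x \<in> {(a, True), (a + 1, True), (b, True), (b + 1, True)}" for x
    using that by auto
  show ?thesis
  proof (rule concat_eq_by_lower_conn[OF E2_diag_brauer[OF ab] D cap_top_brauer[OF Y ja],
        where T = "{(a, True), (a + 1, True), (b, True), (b + 1, True)}"])
    show "x \<in> dots m \<and> snd x \<and> E2_diag m a b x \<in> {(a, True), (a + 1, True), (b, True), (b + 1, True)}
        \<and> cap_top m a ?Y x = E2_diag m a b x"
      if "x \<in> {(a, True), (a + 1, True), (b, True), (b + 1, True)}" for x
      using that ab caps[OF that] by (elim insertE emptyE) (simp_all add: E2_diag_def)
  next
    show "(lower_emb x, lower_emb (cap_top m a ?Y x)) \<in> concat_conn m (E2_diag m a b) D"
      if "x \<in> dots m" "x \<notin> {(a, True), (a + 1, True), (b, True), (b + 1, True)}" for x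
      using that ab E2_lower_conn_cap_b
      by (intro cap_top_lower_conn[OF E2_diag_brauer[OF ab] D Y ja E2_mid_conn(1), where T = "{(b, True), (b + 1, True)}"])
        auto
  qed (rule E2_vertical)
qed

lemma E2_Mid_closed:
  assumes "K = {a, a + 1} \<or> K = {b, b + 1} \<or> K = {a, a + 1, b, b + 1}"
    and "\<And>k. k \<in> K \<Longrightarrow> lower_emb (D (k, True)) \<in> Mid ` K" and "c \<in> K"
  shows "concat_conn m (E2_diag m a b) D `` {Mid c} \<subseteq> Mid ` K"
proof (rule concat_conn_Mid_closed[OF _ assms(3)])
  have "upper_emb (E2_diag m a b (k, False)) \<in> Mid ` K" if "k \<in> K" for k
    using assms(1) that ab by (auto simp: E2_diag_def)
  with assms(2) show "\<forall>k\<in>K. upper_emb (E2_diag m a b (k, False)) \<in> Mid ` K \<and> lower_emb (D (k, True)) \<in> Mid ` K"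
    by blast
qed

lemma E2_cover:
  assumes "\<And>c. c = a \<or> c = b \<Longrightarrow> (\<exists>y\<in>dots m. (Mid c, outer_emb y) \<in> concat_conn m (E2_diag m a b) D)
      \<or> (\<exists>j\<in>J. (Mid j, Mid c) \<in> concat_conn m (E2_diag m a b) D)"
    and k: "1 \<le> k" "k \<le> m"
  shows "(\<exists>y\<in>dots m. (Mid k, outer_emb y) \<in> concat_conn m (E2_diag m a b) D)
      \<or> (\<exists>j\<in>J. (Mid j, Mid k) \<in> concat_conn m (E2_diag m a b) D)"
proof -
  consider "k = a \<or> k = b" | "k = a + 1" | "k = b + 1" | "k \<notin> {a, a + 1, b, b + 1}"
    by blast
  then show ?thesis
  proof cases
    case 1
    then show ?thesis using assms(1) by blast
  next
    case 2
    then show ?thesis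
      using assms(1)[of a] E2_mid_conn(1,2) concat_conn_trans by blast
  next
    case 3
    then show ?thesis
      using assms(1)[of b] E2_mid_conn(3,4) concat_conn_trans by blast
  next
    case 4
    then show ?thesis using E2_mid_outer k by blast
  qed
qed

lemma E2_Mid_closed_pair:
  assumes "c = a \<or> c = b" "D (c, True) = (c + 1, True)"
  shows "concat_conn m (E2_diag m a b) D `` {Mid c} \<subseteq> Mid ` {c, c + 1}"
proof -
  have "D (c + 1, True) = (c, True)" using assms(2) brauer_diagram_invol[OF D] by metis
  with assms show ?thesis by (intro E2_Mid_closed) auto
qed

lemma loops_E2_diag_two_loops:
  assumes Da: "D (a, True) = (a + 1, True)" and Db: "D (b, True) = (b + 1, True)"
  shows "loops m (E2_diag m a b) D = 2"
proof -
  let ?P = "E2_diag m a b"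
  have Ca: "concat_conn m ?P D `` {Mid a} \<subseteq> Mid ` {a, a + 1}"
    and Cb: "concat_conn m ?P D `` {Mid b} \<subseteq> Mid ` {b, b + 1}"
    using E2_Mid_closed_pair Da Db by blast+
  have "loops m ?P D = card {a, b}"
  proof (rule loops_eq_card[OF E2_diag_brauer[OF ab] D])
    show "j = j'" if "j \<in> {a, b}" "j' \<in> {a, b}" "(Mid j, Mid j') \<in> concat_conn m ?P D" for j j'
    proof (rule ccontr)
      assume "j \<noteq> j'"
      with that have "Mid b \<in> Mid ` {a, a + 1} \<or> Mid a \<in> Mid ` {b, b + 1}"
        using Ca Cb by blast
      with ab show False by auto
    qed
    show "(\<exists>y\<in>dots m. (Mid k, outer_emb y) \<in> concat_conn m ?P D) \<or> (\<exists>j\<in>{a, b}. (Mid j, Mid k) \<in> concat_conn m ?P D)"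
      if "1 \<le> k" "k \<le> m" for k
      by (rule E2_cover[OF _ that]) (blast intro: concat_conn_refl)
  next
    show "concat_conn m ?P D `` {Mid j} \<subseteq> range Mid" if "j \<in> {a, b}" for j
      using that Ca Cb by blast
  qed (use ab in auto)
  with ab show ?thesis by simp
qed

lemma loops_E2_diag_loop_at_b:
  assumes Da: "D (a, True) \<noteq> (a + 1, True)" and Db: "D (b, True) = (b + 1, True)"
  shows "loops m (E2_diag m a b) D = 1"
proof -
  let ?P = "E2_diag m a b"
  have Cb: "concat_conn m ?P D `` {Mid b} \<subseteq> Mid ` {b, b + 1}"
    using E2_Mid_closed_pair Db by blast
  have "D (b + 1, True) = (b, True)" using Db brauer_diagram_invol[OF D] by metis
  then have "D (a, True) \<noteq> (b, True)" "D (a, True) \<noteq> (b + 1, True)"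
    using ab Db brauer_diagram_invol[OF D, of "(a, True)"] by auto
  moreover have "D (a, True) \<in> dots m" "D (a, True) \<noteq> (a, True)"
    using ab brauer_diagram_in_dots[OF D] brauer_diagram_neq[OF D] by simp_all
  ultimately have outer_a: "\<exists>y\<in>dots m. (Mid a, outer_emb y) \<in> concat_conn m ?P D"
    using Da ab by (intro E2_lower_outer[OF concat_conn_lowerI[of "(a, True)"]]) auto
  have "loops m ?P D = card {b}"
  proof (rule loops_eq_card[OF E2_diag_brauer[OF ab] D])
    show "concat_conn m ?P D `` {Mid j} \<subseteq> range Mid" if "j \<in> {b}" for j
      using that Cb by blast
    show "(\<exists>y\<in>dots m. (Mid k, outer_emb y) \<in> concat_conn m ?P D) \<or> (\<exists>j\<in>{b}. (Mid j, Mid k) \<in> concat_conn m ?P D)"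
      if "1 \<le> k" "k \<le> m" for k
      by (rule E2_cover[OF _ that]) (use outer_a in \<open>blast intro: concat_conn_refl\<close>)
  qed (use ab in auto)
  then show ?thesis by simp
qed

lemma loops_E2_diag_no_loop:
  assumes Db: "D (b, True) \<noteq> (b + 1, True)" and Ya: "cap_top m b D (a, True) \<noteq> (a + 1, True)"
  shows "loops m (E2_diag m a b) D = 0"
proof -
  let ?P = "E2_diag m a b" and ?Y = "cap_top m b D"
  have P: "?P \<in> brauer_diagrams m" using E2_diag_brauer[OF ab] .
  have Y: "?Y \<in> brauer_diagrams m" using cap_top_brauer[OF D] ab by simp
  have "?Y (b, True) = (b + 1, True)" "?Y (b + 1, True) = (b, True)"
    using ab by (simp_all add: cap_top_def)
  then have "?Y (a, True) \<noteq> (b, True)" "?Y (a, True) \<noteq> (b + 1, True)"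
    using ab brauer_diagram_invol[OF Y, of "(a, True)"] by auto
  moreover have "?Y (a, True) \<in> dots m" "?Y (a, True) \<noteq> (a, True)"
    using ab brauer_diagram_in_dots[OF Y] brauer_diagram_neq[OF Y] by simp_all
  ultimately have outer_a: "\<exists>y\<in>dots m. (Mid a, outer_emb y) \<in> concat_conn m ?P D"
    using Ya ab E2_lower_conn_cap_b[of "(a, True)"] by (intro E2_lower_outer) auto
  have outer_b: "\<exists>y\<in>dots m. (Mid b, outer_emb y) \<in> concat_conn m ?P D"
  proof -
    have Mb: "(Mid b, lower_emb (D (b, True))) \<in> concat_conn m ?P D"
      using ab by (intro concat_conn_lowerI) auto
    have DB: "D (b, True) \<in> dots m" "D (b, True) \<noteq> (b, True)"
      using ab brauer_diagram_in_dots[OF D] brauer_diagram_neq[OF D] by simp_all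
    show ?thesis
    proof (cases "D (b, True) \<in> {(a, True), (a + 1, True)}")
      case True
      then have "(Mid b, Mid a) \<in> concat_conn m ?P D"
        using Mb E2_mid_conn(2) concat_conn_trans by auto
      then show ?thesis using outer_a concat_conn_trans by blast
    next
      case False
      then show ?thesis using Mb DB Db by (intro E2_lower_outer) auto
    qed
  qed
  have "loops m ?P D = card ({} :: nat set)"
  proof (rule loops_eq_card[OF P D])
    show "(\<exists>y\<in>dots m. (Mid k, outer_emb y) \<in> concat_conn m ?P D) \<or> (\<exists>j\<in>{}. (Mid j, Mid k) \<in> concat_conn m ?P D)"
      if "1 \<le> k" "k \<le> m" for k
      by (rule E2_cover[OF _ that]) (use outer_a outer_b in blast)
  qed auto
  then show ?thesis by simp
qed

lemma loops_E2_diag_loop_through_b: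
  assumes DB: "D (b, True) \<in> {(a, True), (a + 1, True)}" "D (b + 1, True) \<in> {(a, True), (a + 1, True)}"
  shows "loops m (E2_diag m a b) D = 1"
proof -
  let ?P = "E2_diag m a b" and ?K = "{a, a + 1, b, b + 1}"
  have P: "?P \<in> brauer_diagrams m" using E2_diag_brauer[OF ab] .
  have "D (b, True) \<noteq> D (b + 1, True)" by (simp add: brauer_diagram_eq_iff[OF D])
  then have "D (a, True) \<in> {(b, True), (b + 1, True)}" "D (a + 1, True) \<in> {(b, True), (b + 1, True)}"
    using DB brauer_diagram_invol[OF D] by (metis insertE empty_iff insertI1 insertI2)+
  then have "lower_emb (D (k, True)) \<in> Mid ` ?K" if "k \<in> ?K" for k
    using that DB by auto
  then have Ca: "concat_conn m ?P D `` {Mid a} \<subseteq> Mid ` ?K"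
    by (intro E2_Mid_closed) auto
  have "(Mid b, lower_emb (D (b, True))) \<in> concat_conn m ?P D"
    using ab by (intro concat_conn_lowerI) auto
  then have "(Mid b, Mid a) \<in> concat_conn m ?P D"
    using DB(1) E2_mid_conn(2) concat_conn_trans by auto
  then have ab_conn: "(Mid a, Mid b) \<in> concat_conn m ?P D"
    using concat_conn_sym[OF P D] by blast
  have "loops m ?P D = card {a}"
  proof (rule loops_eq_card[OF P D])
    show "concat_conn m ?P D `` {Mid j} \<subseteq> range Mid" if "j \<in> {a}" for j
      using that Ca by blast
    show "(\<exists>y\<in>dots m. (Mid k, outer_emb y) \<in> concat_conn m ?P D) \<or> (\<exists>j\<in>{a}. (Mid j, Mid k) \<in> concat_conn m ?P D)"
      if "1 \<le> k" "k \<le> m" for k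
      by (rule E2_cover[OF _ that]) (use ab_conn in \<open>blast intro: concat_conn_refl\<close>)
  qed (use ab in auto)
  then show ?thesis by simp
qed

lemma loops_E2_diag_loop_at_a:
  assumes DA: "D (a, True) = (a + 1, True)"
    and DB: "D (b, True) \<notin> {(a, True), (a + 1, True), (b + 1, True)}"
  shows "loops m (E2_diag m a b) D = 1"
proof -
  let ?P = "E2_diag m a b"
  have P: "?P \<in> brauer_diagrams m" using E2_diag_brauer[OF ab] .
  have Ca: "concat_conn m ?P D `` {Mid a} \<subseteq> Mid ` {a, a + 1}"
    using E2_Mid_closed_pair DA by blast
  have "D (b, True) \<in> dots m" "D (b, True) \<noteq> (b, True)"
    using ab brauer_diagram_in_dots[OF D] brauer_diagram_neq[OF D] by simp_all
  then have outer_b: "\<exists>y\<in>dots m. (Mid b, outer_emb y) \<in> concat_conn m ?P D"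
    using DB ab by (intro E2_lower_outer[OF concat_conn_lowerI[of "(b, True)"]]) auto
  have "loops m ?P D = card {a}"
  proof (rule loops_eq_card[OF P D])
    show "concat_conn m ?P D `` {Mid j} \<subseteq> range Mid" if "j \<in> {a}" for j
      using that Ca by blast
    show "(\<exists>y\<in>dots m. (Mid k, outer_emb y) \<in> concat_conn m ?P D) \<or> (\<exists>j\<in>{a}. (Mid j, Mid k) \<in> concat_conn m ?P D)"
      if "1 \<le> k" "k \<le> m" for k
      by (rule E2_cover[OF _ that]) (use outer_b in \<open>blast intro: concat_conn_refl\<close>)
  qed (use ab in auto)
  then show ?thesis by simp
qed

lemma loops_E2_diag_one_loop:
  assumes Db: "D (b, True) \<noteq> (b + 1, True)" and Ya: "cap_top m b D (a, True) = (a + 1, True)"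
  shows "loops m (E2_diag m a b) D = 1"
proof -
  let ?A = "(a, True)" and ?A' = "(a + 1, True)" and ?B = "(b, True)" and ?B' = "(b + 1, True)"
  have Y: "cap_top m b D = D(D ?B := D ?B', D ?B' := D ?B, ?B := ?B', ?B' := ?B)"
    using ab Db by (intro cap_top_eq_fun_upd[OF D]) auto
  have "D ?B \<noteq> D ?B'" by (simp add: brauer_diagram_eq_iff[OF D])
  consider "D ?B = ?A" | "D ?B' = ?A" | "D ?B \<noteq> ?A" "D ?B' \<noteq> ?A" by blast
  then show ?thesis
  proof cases
    case 1
    then show ?thesis
      using Ya ab \<open>D ?B \<noteq> D ?B'\<close> by (intro loops_E2_diag_loop_through_b) (auto simp: Y)
  next
    case 2
    then show ?thesis
      using Ya ab by (intro loops_E2_diag_loop_through_b) (auto simp: Y)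
  next
    case 3
    then have DA: "D ?A = ?A'" using Ya ab by (simp add: Y)
    then have "D ?A' = ?A" using brauer_diagram_invol[OF D] by metis
    then have "D ?B \<noteq> ?A'" using ab brauer_diagram_invol[OF D, of ?B] by auto
    with DA 3 Db show ?thesis by (intro loops_E2_diag_loop_at_a) auto
  qed
qed

lemma loops_E2_diag:
  "loops m (E2_diag m a b) D = (if D (b, True) = (b + 1, True) then 1 else 0)
     + (if cap_top m b D (a, True) = (a + 1, True) then 1 else 0)"
proof (cases "D (b, True) = (b + 1, True)")
  case True
  then show ?thesis
    using loops_E2_diag_two_loops loops_E2_diag_loop_at_b cap_top_id[OF D]
    by (cases "D (a, True) = (a + 1, True)") simp_all
next
  case False
  then show ?thesis using loops_E2_diag_no_loop loops_E2_diag_one_loop by simp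
qed

end

definition swap_adj :: "nat \<Rightarrow> nat \<Rightarrow> nat" where
  "swap_adj j k = (if k = j then j + 1 else if k = j + 1 then j else k)"

definition gen_perm :: "nat \<Rightarrow> nat \<Rightarrow> nat \<Rightarrow> nat" where
  "gen_perm n i = (if i = 0 then swap_adj n else swap_adj (n - i) \<circ> swap_adj (n + i))"

fun gen_index :: "Cgen \<Rightarrow> nat" where
  "gen_index (gr i) = i"
| "gen_index (ge i) = i"

fun gen_diag :: "nat \<Rightarrow> Cgen \<Rightarrow> diagram" where
  "gen_diag n (gr i) = perm_diag (2 * n) (gen_perm n i)"
| "gen_diag n (ge i) = (if i = 0 then E_diag (2 * n) n else E2_diag (2 * n) (n - i) (n + i))"

fun gen_act :: "nat \<Rightarrow> Cgen \<Rightarrow> diagram \<Rightarrow> diagram" where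
  "gen_act n (gr i) D = permute_top (2 * n) (gen_perm n i) D"
| "gen_act n (ge i) D = (if i = 0 then cap_top (2 * n) n D
     else cap_top (2 * n) (n - i) (cap_top (2 * n) (n + i) D))"

fun gen_loops :: "nat \<Rightarrow> Cgen \<Rightarrow> diagram \<Rightarrow> nat" where
  "gen_loops n (gr i) D = 0"
| "gen_loops n (ge i) D = (if i = 0 then (if D (n, True) = (n + 1, True) then 1 else 0)
     else (if D (n + i, True) = (n + i + 1, True) then 1 else 0)
        + (if cap_top (2 * n) (n + i) D (n - i, True) = (n - i + 1, True) then 1 else 0))"

fun word_diag :: "nat \<Rightarrow> Cgen list \<Rightarrow> diagram" where
  "word_diag n [] = id_diag (2 * n)"
| "word_diag n (g # w) = gen_act n g (word_diag n w)"

fun word_loops :: "nat \<Rightarrow> Cgen list \<Rightarrow> nat" where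
  "word_loops n [] = 0"
| "word_loops n (g # w) = gen_loops n g (word_diag n w) + word_loops n w"

lemma id_diag_brauer: "id_diag m \<in> brauer_diagrams m"
  by (intro brauer_diagramsI) (auto simp: id_diag_def)

lemma gen_perm_invol: "2 \<le> n \<Longrightarrow> i < n \<Longrightarrow> is_invol (2 * n) (gen_perm n i)"
  by (auto simp: is_invol_def gen_perm_def swap_adj_def)

lemma gen_diag_brauer: "2 \<le> n \<Longrightarrow> gen_index g < n \<Longrightarrow> gen_diag n g \<in> brauer_diagrams (2 * n)"
  by (cases g) (auto simp: perm_diag_brauer gen_perm_invol E_diag_brauer E2_diag_brauer)

lemma concat_gen_diag:
  assumes n: "2 \<le> n" and g: "gen_index g < n" and D: "D \<in> brauer_diagrams (2 * n)"
  shows "concat (2 * n) (gen_diag n g) D = gen_act n g D \<and> loops (2 * n) (gen_diag n g) D = gen_loops n g D"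
proof (cases g)
  case (gr i)
  with n g show ?thesis
    by (simp add: concat_perm_diag[OF D] loops_perm_diag[OF D] gen_perm_invol)
next
  case (ge i)
  with n g show ?thesis
    by (cases "i = 0") (simp_all add: concat_E_diag[OF D] loops_E_diag[OF D] concat_E2_diag[OF D]
        loops_E2_diag[OF D])
qed

lemma gen_act_brauer:
  "2 \<le> n \<Longrightarrow> gen_index g < n \<Longrightarrow> D \<in> brauer_diagrams (2 * n) \<Longrightarrow> gen_act n g D \<in> brauer_diagrams (2 * n)"
  by (cases g) (auto simp: permute_top_brauer gen_perm_invol cap_top_brauer)

lemma R_diag_eq_perm_diag: "R_diag m j = perm_diag m (swap_adj j)"
  by (auto simp: R_diag_def perm_diag_def swap_adj_def fun_eq_iff)

lemma permute_top_perm_diag: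
  assumes "is_invol m \<sigma>" "\<sigma> \<circ> \<tau> = \<tau> \<circ> \<sigma>"
  shows "permute_top m \<sigma> (perm_diag m \<tau>) = perm_diag m (\<sigma> \<circ> \<tau>)"
proof
  fix x :: dot
  show "permute_top m \<sigma> (perm_diag m \<tau>) x = perm_diag m (\<sigma> \<circ> \<tau>) x"
    using assms by (cases x; cases "snd x") (auto simp: permute_top_def perm_diag_def top_perm_def
        is_invol_def fun_eq_iff)
qed

lemma cap_top_E_diag: "1 \<le> a \<Longrightarrow> a + 1 < b \<Longrightarrow> b + 1 \<le> m \<Longrightarrow> cap_top m a (E_diag m b) = E2_diag m a b"
  by (auto simp: cap_top_def E_diag_def E2_diag_def fun_eq_iff)

lemma phiC_eq_gen_diag:
  assumes n: "2 \<le> n" and g: "gen_index g < n"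
  shows "phiC n \<delta> g = br_basis (gen_diag n g)"
proof (cases g)
  case (gr i)
  show ?thesis
  proof (cases "i = 0")
    case False
    have i: "1 \<le> n - i" "n - i + 1 < n + i" "n + i + 1 \<le> 2 * n"
      using False g gr by auto
    then have \<sigma>: "is_invol (2 * n) (swap_adj (n - i))" "is_invol (2 * n) (swap_adj (n + i))"
      by (auto simp: is_invol_def swap_adj_def)
    have "swap_adj (n - i) \<circ> swap_adj (n + i) = swap_adj (n + i) \<circ> swap_adj (n - i)"
      using i by (auto simp: swap_adj_def)
    then have "concat (2 * n) (R_diag (2 * n) (n - i)) (R_diag (2 * n) (n + i)) = gen_diag n g"
      using gr False \<sigma> by (simp add: R_diag_eq_perm_diag concat_perm_diag perm_diag_brauer
          permute_top_perm_diag gen_perm_def)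
    moreover have "loops (2 * n) (R_diag (2 * n) (n - i)) (R_diag (2 * n) (n + i)) = 0"
      using \<sigma> by (simp add: R_diag_eq_perm_diag loops_perm_diag perm_diag_brauer)
    ultimately show ?thesis
      using gr False br_mult_smult_basis[of "R_diag (2 * n) (n - i)" "2 * n" "R_diag (2 * n) (n + i)" \<delta> 1 1] \<sigma>
      by (simp add: R_diag_eq_perm_diag perm_diag_brauer)
  qed (simp add: gr R_diag_eq_perm_diag gen_perm_def)
next
  case (ge i)
  show ?thesis
  proof (cases "i = 0")
    case False
    have i: "1 \<le> n - i" "n - i + 1 < n + i" "n + i + 1 \<le> 2 * n"
      using False g ge by auto
    have "E_diag (2 * n) (n + i) (n - i, True) \<noteq> (n - i + 1, True)"
      using i by (simp add: E_diag_def)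
    with i have "concat (2 * n) (E_diag (2 * n) (n - i)) (E_diag (2 * n) (n + i)) = gen_diag n g"
      "loops (2 * n) (E_diag (2 * n) (n - i)) (E_diag (2 * n) (n + i)) = 0"
      using ge False by (simp_all add: concat_E_diag loops_E_diag E_diag_brauer cap_top_E_diag)
    then show ?thesis
      using ge False br_mult_smult_basis[of "E_diag (2 * n) (n - i)" "2 * n" "E_diag (2 * n) (n + i)" \<delta> 1 1] i
      by (simp add: E_diag_brauer)
  qed (simp add: ge)
qed

lemma word_eval_phiC:
  assumes n: "2 \<le> n" and w: "\<forall>g\<in>set w. gen_index g < n"
  shows "word_eval (2 * n) \<delta> (phiC n \<delta>) w = br_smult (\<delta> ^ word_loops n w) (br_basis (word_diag n w))
    \<and> word_diag n w \<in> brauer_diagrams (2 * n)"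
  using w
proof (induction w)
  case Nil
  then show ?case by (simp add: word_eval_def br_one_def id_diag_brauer)
next
  case (Cons g w)
  then have g: "gen_index g < n" and D: "word_diag n w \<in> brauer_diagrams (2 * n)"
    and IH: "word_eval (2 * n) \<delta> (phiC n \<delta>) w = br_smult (\<delta> ^ word_loops n w) (br_basis (word_diag n w))"
    by auto
  have "word_eval (2 * n) \<delta> (phiC n \<delta>) (g # w)
      = br_mult (2 * n) \<delta> (br_smult 1 (br_basis (gen_diag n g))) (br_smult (\<delta> ^ word_loops n w) (br_basis (word_diag n w)))"
    by (simp add: word_eval_def IH[unfolded word_eval_def] phiC_eq_gen_diag[OF n g])
  also have "\<dots> = br_smult (\<delta> ^ word_loops n w * \<delta> ^ gen_loops n g (word_diag n w)) (br_basis (gen_act n g (word_diag n w)))"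
    using concat_gen_diag[OF n g D] by (simp only: br_mult_smult_basis[OF gen_diag_brauer[OF n g] D] mult_1)
  also have "\<dots> = br_smult (\<delta> ^ word_loops n (g # w)) (br_basis (word_diag n (g # w)))"
    by (simp add: power_add mult.commute[of "\<delta> ^ word_loops n w"])
  finally show ?case
    using gen_act_brauer[OF n g D] by simp
qed

definition diagram_relation :: "nat \<Rightarrow> Cgen list \<Rightarrow> nat \<Rightarrow> Cgen list \<Rightarrow> bool" where
  "diagram_relation n l k r \<longleftrightarrow> word_diag n l = word_diag n r \<and> word_loops n l = k + word_loops n r"

lemma word_eval_relation:
  assumes "2 \<le> n" "\<forall>g\<in>set l \<union> set r. gen_index g < n" "diagram_relation n l k r"
  shows "word_eval (2 * n) \<delta> (phiC n \<delta>) l = br_smult (\<delta> ^ k) (word_eval (2 * n) \<delta> (phiC n \<delta>) r)"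
  using assms word_eval_phiC[OF assms(1), where w = l and \<delta> = \<delta>] word_eval_phiC[OF assms(1), where w = r and \<delta> = \<delta>]
  by (simp add: diagram_relation_def br_smult_smult power_add)

section \<open>Symmetry of the generator diagrams\<close>

lemma symmetric_perm_diag:
  assumes "is_invol m \<sigma>" "\<And>k. 1 \<le> k \<Longrightarrow> k \<le> m \<Longrightarrow> \<sigma> (m + 1 - k) = m + 1 - \<sigma> k"
  shows "symmetric_diag m (perm_diag m \<sigma>)"
  unfolding symmetric_diag_def
proof
  fix x :: dot assume "x \<in> dots m"
  with assms show "perm_diag m \<sigma> (mirror m x) = mirror m (perm_diag m \<sigma> x)"
    by (cases x) (auto simp: perm_diag_def mirror_def is_invol_def)
qed

lemma swap_adj_mirror: "1 \<le> k \<Longrightarrow> k < M \<Longrightarrow> j + 1 < M \<Longrightarrow> swap_adj j (M - k) = M - swap_adj (M - Suc j) k"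
  unfolding swap_adj_def by auto

lemma swap_adj_bounds: "1 \<le> k \<Longrightarrow> k < M \<Longrightarrow> 1 \<le> j \<Longrightarrow> j + 1 < M \<Longrightarrow> 1 \<le> swap_adj j k \<and> swap_adj j k < M"
  unfolding swap_adj_def by auto

lemma swap_adj_commute: "a + 1 < b \<Longrightarrow> swap_adj a (swap_adj b k) = swap_adj b (swap_adj a k)"
  by (simp add: swap_adj_def)

lemma gen_perm_mirror:
  assumes i: "i < n" and k: "1 \<le> k" "k \<le> 2 * n"
  shows "gen_perm n i (2 * n + 1 - k) = 2 * n + 1 - gen_perm n i k"
proof (cases "i = 0")
  case True
  then show ?thesis using swap_adj_mirror[of k "2 * n + 1" n] k i by (simp add: gen_perm_def)
next
  case False
  let ?M = "2 * n + 1"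
  have k': "k < ?M" using k by simp
  have b: "1 \<le> swap_adj (n - i) k \<and> swap_adj (n - i) k < ?M"
    using swap_adj_bounds[OF k(1) k'] False i by auto
  have "gen_perm n i (?M - k) = swap_adj (n - i) (swap_adj (n + i) (?M - k))"
    using False by (simp add: gen_perm_def)
  also have "swap_adj (n + i) (?M - k) = ?M - swap_adj (n - i) k"
    using swap_adj_mirror[OF k(1) k', of "n + i"] i by (simp add: Suc_diff_Suc)
  also have "swap_adj (n - i) (?M - swap_adj (n - i) k) = ?M - swap_adj (n + i) (swap_adj (n - i) k)"
    using swap_adj_mirror[of "swap_adj (n - i) k" ?M "n - i"] b False i by simp
  also have "swap_adj (n + i) (swap_adj (n - i) k) = swap_adj (n - i) (swap_adj (n + i) k)"
    using False i swap_adj_commute[of "n - i" "n + i" k] by simp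
  finally show ?thesis using False by (simp add: gen_perm_def)
qed

lemma symmetric_E_diag: "symmetric_diag (2 * n) (E_diag (2 * n) n)"
  unfolding symmetric_diag_def E_diag_def mirror_def
  by (clarsimp; safe; simp; arith)
lemma symmetric_E2_diag:
  assumes "a + b = m" "1 \<le> a" "a + 1 < b"
  shows "symmetric_diag m (E2_diag m a b)"
  unfolding symmetric_diag_def
proof (intro ballI)
  fix x :: dot assume x: "x \<in> dots m"
  obtain k e where k: "x = (k, e)" "1 \<le> k" "k \<le> m" using x by (cases x) auto
  consider "k = a" | "k = a + 1" | "k = b" | "k = b + 1" | "k \<notin> {a, a + 1, b, b + 1}" by blast
  then show "E2_diag m a b (mirror m x) = mirror m (E2_diag m a b x)"
    using assms k by cases (auto simp: E2_diag_def mirror_def)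
qed

lemma gen_diag_symmetric:
  assumes "2 \<le> n" "gen_index g < n"
  shows "symmetric_diag (2 * n) (gen_diag n g)"
proof (cases g)
  case (gr i)
  with assms show ?thesis
    by (auto intro!: symmetric_perm_diag gen_perm_invol gen_perm_mirror)
next
  case (ge i)
  with assms show ?thesis
    by (simp add: symmetric_E_diag symmetric_E2_diag)
qed

lemma phiC_in_SBr: "2 \<le> n \<Longrightarrow> gen_index g < n \<Longrightarrow> phiC n \<delta> g \<in> SBr (2 * n)"
  by (auto simp: SBr_def phiC_eq_gen_diag br_basis_def gen_diag_brauer gen_diag_symmetric)

section \<open>Computing with diagrams given by finite tables\<close>

text \<open>A diagram on m strands is stored as the list of its values that differ from the identity
  diagram; the relations then become finite computations, uniformly in n.\<close>

definition tab_diag :: "nat \<Rightarrow> (dot \<times> dot) list \<Rightarrow> diagram" where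
  "tab_diag m L = (\<lambda>x. if x \<in> dots m then (case map_of L x of Some y \<Rightarrow> y | None \<Rightarrow> id_diag m x) else x)"

definition cap_tab :: "nat \<Rightarrow> nat \<Rightarrow> (dot \<times> dot) list \<Rightarrow> (dot \<times> dot) list" where
  "cap_tab m j L = (let a = tab_diag m L (j, True); b = tab_diag m L (Suc j, True) in
     [((j, True), (Suc j, True)), ((Suc j, True), (j, True))] @
     (if a = (Suc j, True) then [] else [(a, b), (b, a)]) @ L)"

definition perm_tab :: "nat \<Rightarrow> (nat \<Rightarrow> nat) \<Rightarrow> nat list \<Rightarrow> (dot \<times> dot) list \<Rightarrow> (dot \<times> dot) list" where
  "perm_tab m \<sigma> S L = map (\<lambda>x. (x, top_perm \<sigma> (tab_diag m L (top_perm \<sigma> x))))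
     (map fst L @ List.concat (map (\<lambda>k. [(k, True), (k, False)]) S))"

lemma tab_diag_Nil: "tab_diag m [] = id_diag m"
  by (simp add: tab_diag_def id_diag_def fun_eq_iff)

lemma tab_diag_apply:
  "tab_diag m L (k, e) = (if 1 \<le> k \<and> k \<le> m then (case map_of L (k, e) of Some y \<Rightarrow> y | None \<Rightarrow> (k, \<not> e)) else (k, e))"
  by (simp add: tab_diag_def id_diag_def split: option.split)

lemma tab_diag_eqI:
  assumes "\<forall>x\<in>set (map fst L1 @ map fst L2). x \<in> dots m \<longrightarrow> tab_diag m L1 x = tab_diag m L2 x"
  shows "tab_diag m L1 = tab_diag m L2"
proof
  fix x
  show "tab_diag m L1 x = tab_diag m L2 x"
  proof (cases "x \<in> set (map fst L1 @ map fst L2) \<and> x \<in> dots m")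
    case False
    then have "x \<notin> dots m \<or> (map_of L1 x = None \<and> map_of L2 x = None)"
      by (auto simp: map_of_eq_None_iff)
    then show ?thesis by (auto simp: tab_diag_def)
  qed (use assms in blast)
qed

lemma cap_top_tab_diag: "cap_top m j (tab_diag m L) = tab_diag m (cap_tab m j L)"
  by (auto simp: fun_eq_iff cap_top_def tab_diag_def cap_tab_def Let_def split: option.split)

lemma map_of_map_graph: "map_of (map (\<lambda>x. (x, f x)) K) x = (if x \<in> set K then Some (f x) else None)"
  by (induction K) auto

lemma permute_top_tab_diag:
  assumes "\<And>k. k \<notin> set S \<Longrightarrow> \<sigma> k = k"
  shows "permute_top m \<sigma> (tab_diag m L) = tab_diag m (perm_tab m \<sigma> S L)"
proof
  fix x :: dot
  let ?K = "map fst L @ List.concat (map (\<lambda>k. [(k, True), (k, False)]) S)"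
  show "permute_top m \<sigma> (tab_diag m L) x = tab_diag m (perm_tab m \<sigma> S L) x"
  proof (cases "x \<in> dots m \<and> x \<in> set ?K")
    case True
    then show ?thesis
      by (simp add: permute_top_def perm_tab_def map_of_map_graph tab_diag_def
          del: map_append set_append set_concat set_map)
  next
    case False
    moreover obtain k e where x: "x = (k, e)" by (cases x)
    ultimately have "x \<notin> dots m \<or> (k \<notin> set S \<and> map_of L x = None)"
      by (auto simp: map_of_eq_None_iff)
    then show ?thesis
      using False assms x
      by (cases e) (auto simp: permute_top_def perm_tab_def map_of_map_graph tab_diag_def top_perm_def
          id_diag_def simp del: map_append set_append set_concat set_map)
  qed
qed

definition gen_support :: "nat \<Rightarrow> nat \<Rightarrow> nat list" where
  "gen_support n i = (if i = 0 then [n, Suc n] else [n - i, Suc (n - i), n + i, Suc (n + i)])"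

text \<open>The equation m = 2 * n is kept as a premise so that the simplifier can match it after
  normalising the arithmetic in m.\<close>

lemma gen_act_tab_diag:
  "m = 2 * n \<Longrightarrow> gen_act n (gr i) (tab_diag m L) = tab_diag m (perm_tab m (gen_perm n i) (gen_support n i) L)"
  "m = 2 * n \<Longrightarrow> gen_act n (ge i) (tab_diag m L) = (if i = 0 then tab_diag m (cap_tab m n L)
     else tab_diag m (cap_tab m (n - i) (cap_tab m (n + i) L)))"
  by (auto intro!: permute_top_tab_diag simp: cap_top_tab_diag gen_support_def gen_perm_def swap_adj_def)

lemma swap_adj_Suc: "swap_adj j k = (if k = j then Suc j else if k = Suc j then j else k)"
  by (simp add: swap_adj_def)

lemma top_perm_simps: "top_perm \<sigma> (k, True) = (\<sigma> k, True)" "top_perm \<sigma> (k, False) = (k, False)"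
  by (simp_all add: top_perm_def)

lemmas word_diag_tab_simps = gen_act_tab_diag tab_diag_Nil[symmetric]

lemmas tab_eval_simps = cap_tab_def perm_tab_def Let_def tab_diag_apply gen_perm_def swap_adj_Suc
  gen_support_def top_perm_simps

section \<open>The defining relations\<close>

text \<open>Writing n and the indices as explicit successors lets the simplifier decide every
  comparison between strand positions that arises in the computations.\<close>

lemma diagram_relations_at_first_node:
  assumes "n = Suc (Suc q)"
  shows "diagram_relation n [gr 0, gr 0] 0 []"
    "diagram_relation n [gr 0, ge 0] 0 [ge 0]"
    "diagram_relation n [ge 0, gr 0] 0 [ge 0]"
    "diagram_relation n [ge 0, ge 0] 1 [ge 0]"
    "diagram_relation n [gr 1, gr 0, gr 1, gr 0] 0 [gr 0, gr 1, gr 0, gr 1]"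
    "diagram_relation n [gr 1, gr 0, ge 1] 0 [gr 0, ge 1]"
    "diagram_relation n [gr 1, ge 0, gr 1, ge 0] 0 [ge 0, ge 1, ge 0]"
    "diagram_relation n [gr 1, gr 0, gr 1, ge 0] 0 [ge 0, gr 1, gr 0, gr 1]"
    "diagram_relation n [ge 1, gr 0, ge 1] 1 [ge 1]"
    "diagram_relation n [ge 1, ge 0, ge 1] 1 [ge 1]"
    "diagram_relation n [ge 1, gr 0, gr 1] 0 [ge 1, gr 0]"
    "diagram_relation n [ge 1, ge 0, gr 1] 0 [ge 1, ge 0]"
  by ((simp only: assms diagram_relation_def, intro conjI);
      (simp del: gen_act.simps add: word_diag_tab_simps); (rule tab_diag_eqI)?;
      simp add: tab_eval_simps cap_top_tab_diag)+

lemma diagram_relations_at_node: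
  assumes "n = Suc p + Suc i0" "i = Suc i0"
  shows "diagram_relation n [gr i, gr i] 0 []"
    "diagram_relation n [gr i, ge i] 0 [ge i]"
    "diagram_relation n [ge i, gr i] 0 [ge i]"
    "diagram_relation n [ge i, ge i] 2 [ge i]"
  by ((simp only: assms diagram_relation_def, intro conjI);
      (simp del: gen_act.simps add: word_diag_tab_simps); (rule tab_diag_eqI)?;
      simp add: tab_eval_simps cap_top_tab_diag)+

lemma diagram_relations_far_from_first_node:
  assumes "n = Suc p + Suc (Suc j0)" "j = Suc (Suc j0)"
  shows "diagram_relation n [gr 0, gr j] 0 [gr j, gr 0]"
    "diagram_relation n [ge 0, gr j] 0 [gr j, ge 0]"
    "diagram_relation n [ge 0, ge j] 0 [ge j, ge 0]"
    "diagram_relation n [gr j, gr 0] 0 [gr 0, gr j]"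
    "diagram_relation n [ge j, gr 0] 0 [gr 0, ge j]"
    "diagram_relation n [ge j, ge 0] 0 [ge 0, ge j]"
  by ((simp only: assms diagram_relation_def, intro conjI);
      (simp del: gen_act.simps add: word_diag_tab_simps); (rule tab_diag_eqI)?;
      simp add: tab_eval_simps cap_top_tab_diag)+

lemma diagram_relations_far_nodes:
  assumes "n = Suc p + (Suc i0 + Suc (Suc d))" "i = Suc i0" "j = Suc i0 + Suc (Suc d)"
  shows "diagram_relation n [gr i, gr j] 0 [gr j, gr i]"
    "diagram_relation n [ge i, gr j] 0 [gr j, ge i]"
    "diagram_relation n [ge i, ge j] 0 [ge j, ge i]"
    "diagram_relation n [gr j, gr i] 0 [gr i, gr j]"
    "diagram_relation n [ge j, gr i] 0 [gr i, ge j]"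
    "diagram_relation n [ge j, ge i] 0 [ge i, ge j]"
  by ((simp only: assms diagram_relation_def, intro conjI);
      (simp del: gen_act.simps add: word_diag_tab_simps); (rule tab_diag_eqI)?;
      simp add: tab_eval_simps cap_top_tab_diag)+

lemma diagram_relations_adjacent_nodes:
  assumes "n = Suc p + Suc (Suc i0)" "i = Suc i0" "j = Suc (Suc i0)"
  shows "diagram_relation n [gr i, gr j, gr i] 0 [gr j, gr i, gr j]"
    "diagram_relation n [gr j, gr i, ge j] 0 [ge i, ge j]"
    "diagram_relation n [gr i, ge j, gr i] 0 [gr j, ge i, gr j]"
    "diagram_relation n [gr j, gr i, gr j] 0 [gr i, gr j, gr i]"
    "diagram_relation n [gr i, gr j, ge i] 0 [ge j, ge i]"
    "diagram_relation n [gr j, ge i, gr j] 0 [gr i, ge j, gr i]"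
  by ((simp only: assms diagram_relation_def, intro conjI);
      (simp del: gen_act.simps add: word_diag_tab_simps); (rule tab_diag_eqI)?;
      simp add: tab_eval_simps cap_top_tab_diag)+

lemma diagram_relations_single:
  assumes "2 \<le> n" "i < n"
  shows "diagram_relation n [gr i, gr i] 0 [] \<and> diagram_relation n [gr i, ge i] 0 [ge i]
    \<and> diagram_relation n [ge i, gr i] 0 [ge i] \<and> (0 < i \<longrightarrow> diagram_relation n [ge i, ge i] 2 [ge i])"
proof (cases "i = 0")
  case True
  have "n = Suc (Suc (n - 2))" using assms by simp
  from diagram_relations_at_first_node[OF this] True show ?thesis by simp
next
  case False
  then have "n = Suc (n - i - 1) + Suc (i - 1)" "i = Suc (i - 1)" using assms by auto
  from diagram_relations_at_node[OF this] show ?thesis by simp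
qed

lemma diagram_relations_commuting:
  assumes "i < n" "j < n" "nadj i j"
  shows "diagram_relation n [gr i, gr j] 0 [gr j, gr i]" "diagram_relation n [ge i, gr j] 0 [gr j, ge i]"
    "diagram_relation n [ge i, ge j] 0 [ge j, ge i]"
proof -
  consider "i = 0" | "j = 0" | "0 < i" "i < j" | "0 < j" "j < i"
    using assms(3) by (fastforce simp: nadj_def)
  then have "diagram_relation n [gr i, gr j] 0 [gr j, gr i] \<and> diagram_relation n [ge i, gr j] 0 [gr j, ge i]
    \<and> diagram_relation n [ge i, ge j] 0 [ge j, ge i]"
  proof cases
    case 1
    then have "n = Suc (n - j - 1) + Suc (Suc (j - 2))" "j = Suc (Suc (j - 2))"
      using assms by (auto simp: nadj_def)
    from diagram_relations_far_from_first_node[OF this] 1 show ?thesis by simp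
  next
    case 2
    then have "n = Suc (n - i - 1) + Suc (Suc (i - 2))" "i = Suc (Suc (i - 2))"
      using assms by (auto simp: nadj_def)
    from diagram_relations_far_from_first_node[OF this] 2 show ?thesis by simp
  next
    case 3
    then have "n = Suc (n - j - 1) + (Suc (i - 1) + Suc (Suc (j - i - 2)))" "i = Suc (i - 1)"
      "j = Suc (i - 1) + Suc (Suc (j - i - 2))"
      using assms by (auto simp: nadj_def)
    from diagram_relations_far_nodes[OF this] show ?thesis by simp
  next
    case 4
    then have "n = Suc (n - i - 1) + (Suc (j - 1) + Suc (Suc (i - j - 2)))" "j = Suc (j - 1)"
      "i = Suc (j - 1) + Suc (Suc (i - j - 2))"
      using assms by (auto simp: nadj_def)
    from diagram_relations_far_nodes[OF this] show ?thesis by simp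
  qed
  then show "diagram_relation n [gr i, gr j] 0 [gr j, gr i]" "diagram_relation n [ge i, gr j] 0 [gr j, ge i]"
    "diagram_relation n [ge i, ge j] 0 [ge j, ge i]" by simp_all
qed

lemma diagram_relations_braid:
  assumes "0 < i" "0 < j" "i < n" "j < n" "adj i j"
  shows "diagram_relation n [gr i, gr j, gr i] 0 [gr j, gr i, gr j]"
    "diagram_relation n [gr j, gr i, ge j] 0 [ge i, ge j]"
    "diagram_relation n [gr i, ge j, gr i] 0 [gr j, ge i, gr j]"
proof -
  have "diagram_relation n [gr i, gr j, gr i] 0 [gr j, gr i, gr j] \<and> diagram_relation n [gr j, gr i, ge j] 0 [ge i, ge j]
    \<and> diagram_relation n [gr i, ge j, gr i] 0 [gr j, ge i, gr j]"
  proof (cases "i + 1 = j")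
    case True
    then have "n = Suc (n - j - 1) + Suc (Suc (i - 1))" "i = Suc (i - 1)" "j = Suc (Suc (i - 1))"
      using assms by auto
    from diagram_relations_adjacent_nodes[OF this] show ?thesis by simp
  next
    case False
    then have "n = Suc (n - i - 1) + Suc (Suc (j - 1))" "j = Suc (j - 1)" "i = Suc (Suc (j - 1))"
      using assms by (auto simp: adj_def)
    from diagram_relations_adjacent_nodes[OF this] show ?thesis by simp
  qed
  then show "diagram_relation n [gr i, gr j, gr i] 0 [gr j, gr i, gr j]"
    "diagram_relation n [gr j, gr i, ge j] 0 [ge i, ge j]"
    "diagram_relation n [gr i, ge j, gr i] 0 [gr j, ge i, gr j]" by simp_all
qed

lemma diagram_relation_BrC_rels:
  assumes n: "2 \<le> n" and rel: "(l, k, r) \<in> BrC_rels n"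
  shows "diagram_relation n l k r"
proof -
  have "n = Suc (Suc (n - 2))" "1 < n" using n by simp_all
  note first = diagram_relations_at_first_node[OF this(1), unfolded One_nat_def]
  from rel \<open>1 < n\<close> show ?thesis
    unfolding BrC_rels_def
    by (elim UnE; auto simp: first diagram_relations_single[OF n] diagram_relations_commuting
        diagram_relations_braid)
qed

lemma BrC_rels_gen_index: "0 < n \<Longrightarrow> (l, k, r) \<in> BrC_rels n \<Longrightarrow> \<forall>g\<in>set l \<union> set r. gen_index g < n"
  unfolding BrC_rels_def by (auto split: if_splits)

theorem mainTheorem4:
  fixes \<delta> :: "'a::comm_ring_1" and n :: nat
  assumes "n \<ge> 2" and "\<delta> dvd 1"
  shows "(\<forall>i<n. phiC n \<delta> (gr i) \<in> SBr (2*n) \<and> phiC n \<delta> (ge i) \<in> SBr (2*n))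
       \<and> (\<forall>(l, k, r) \<in> BrC_rels n.
            word_eval (2*n) \<delta> (phiC n \<delta>) l = br_smult (\<delta> ^ k) (word_eval (2*n) \<delta> (phiC n \<delta>) r))"
proof -
  have SBr: "phiC n \<delta> g \<in> SBr (2 * n)" if "gen_index g < n" for g
    using phiC_in_SBr[OF assms(1) that] .
  have rel: "word_eval (2 * n) \<delta> (phiC n \<delta>) l = br_smult (\<delta> ^ k) (word_eval (2 * n) \<delta> (phiC n \<delta>) r)"
    if "(l, k, r) \<in> BrC_rels n" for l k r
    using assms(1) that
    by (intro word_eval_relation BrC_rels_gen_index diagram_relation_BrC_rels) auto
  show ?thesis
    using SBr rel by (auto simp del: phiC.simps)
qed

end
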